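(* Assume $\mathrm{rank}\,N=3$. Let $g$ be a $\mathbf{\Sigma}$-piecewise linear function such that $\mathcal L=\sum_{i=1}^n g(v_i)E_i$ is a nonzero element of $\mathrm{Pic}_{\mathbb{R}}(\mathbb{P}_{\mathbf{\Sigma}})$ that is not contained in the interior of $Z_I$ for any $I\in\Delta$. Suppose there is $s\in\{1,\dots,n\}$ with $g(v_s)=0$ and $g(v_i)\ne0$ for all $i\ne s$. Then the number of sign changes of $g$ around $B_s$ is exactly two.
   Context: $N$ is a lattice of rank $m$, $M=\mathrm{Hom}(N,\mathbb{Z})$, $N_{\mathbb{R}}=N\otimes\mathbb{R}$, $M_{\mathbb{R}}=M\otimes\mathbb{R}$; $\Sigma$ is a complete simplicial fan in $N_{\mathbb{R}}$ with $n$ rays and $v_i\in N$ a nonzero lattice point on the $i$-th ray ($\mathbf{\Sigma}=(\Sigma,\{v_i\})$), with associated toric DM stack $\mathbb{P}_{\mathbf{\Sigma}}$. $\mathrm{Pic}_{\mathbb{R}}(\mathbb{P}_{\mathbf{\Sigma}})$ is identified with $\mathbb{R}^n/\{\sum_i w(v_i)E_i:w\in M_{\mathbb{R}}\}$, where $E_1,\dots,E_n$ is the standard basis of $\mathbb{R}^n$. A $\mathbf{\Sigma}$-piecewise linear function is a continuous function $N_{\mathbb{R}}\to\mathbb{R}$ whose restriction to each cone of $\Sigma$ is linear. For $I\subseteq\{1,\dots,n\}$, $C_I$ is the simplicial complex on $\{1,\dots,n\}$ whose faces are the subsets $J\subseteq I$ (including $\emptyset$) with $\{v_i:i\in J\}$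 contained in a single cone of $\Sigma$. $\Delta$ is the set of $I\subseteq\{1,\dots,n\}$ such that $C_I$ has nonzero reduced homology in some degree (reduced homology with $\mathbb{C}$-coefficients, the complex $\{\emptyset\}$ having $\tilde H_{-1}=\mathbb{C}$; so $\emptyset,\{1,\dots,n\}\in\Delta$). For $I\subseteq\{1,\dots,n\}$, $Z_I=\sum_{i\in I}\mathbb{R}_{\ge0}E_i-\sum_{i\notin I}\mathbb{R}_{\ge0}E_i\subseteq\mathrm{Pic}_{\mathbb{R}}(\mathbb{P}_{\mathbf{\Sigma}})$. For rank $3$: $B_s$ is the set of $v_j$ such that $v_j$ and $v_s$ span a two-dimensional cone of $\Sigma$; these are cyclically ordered around $v_s$ (say clockwise) as $v_{j_1},\dots,v_{j_l}$. Treating "$\ge0$" and "$<0$" as the two signs, the number of sign changes of $g$ around $B_s$ is the number of cyclically consecutive pairs $\{v_{j_k},v_{j_{k+1}}\}$ (indices mod $l$) such that $g(v_{j_k})$ and $g(v_{j_{k+1}})$ have different signs. *)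

theory Defs
  imports "HOL-Analysis.Analysis"
begin

text \<open>Rays are indexed by a finite linearly ordered type 'n (so n = CARD('n));
  N = Z^3 sits inside N_R = real^3; M_R is represented by real^3 via the dot product.\<close>

definition cone_of :: "('n \<Rightarrow> real^3) \<Rightarrow> 'n set \<Rightarrow> (real^3) set" where
  "cone_of v S = {x. \<exists>c. (\<forall>i\<in>S. 0 \<le> c i) \<and> x = (\<Sum>i\<in>S. c i *\<^sub>R v i)}"

definition complete_simplicial_fan :: "('n \<Rightarrow> real^3) \<Rightarrow> 'n set set \<Rightarrow> bool" where
  "complete_simplicial_fan v F \<longleftrightarrow>
     {} \<in> F \<and> (\<forall>S\<in>F. \<forall>T. T \<subseteq> S \<longrightarrow> T \<in> F) \<and> (\<forall>i. {i} \<in> F) \<and>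
     (\<forall>S\<in>F. inj_on v S \<and> independent (v ` S)) \<and>
     (\<forall>S\<in>F. \<forall>T\<in>F. cone_of v S \<inter> cone_of v T = cone_of v (S \<inter> T)) \<and>
     (\<Union>S\<in>F. cone_of v S) = UNIV"

definition sigma_pl :: "('n \<Rightarrow> real^3) \<Rightarrow> 'n set set \<Rightarrow> (real^3 \<Rightarrow> real) \<Rightarrow> bool" where
  "sigma_pl v F g \<longleftrightarrow> continuous_on UNIV g \<and>
     (\<forall>S\<in>F. \<exists>w. \<forall>x\<in>cone_of v S. g x = w \<bullet> x)"

text \<open>Pic_R = R^n / W, with W the image of M_R. We work with representatives in R^n.\<close>
definition M_image :: "('n::finite \<Rightarrow> real^3) \<Rightarrow> (real^'n) set" where
  "M_image v = {(\<chi> i. w \<bullet> v i) | w. True}"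

definition pic_vec :: "('n::finite \<Rightarrow> real^3) \<Rightarrow> (real^3 \<Rightarrow> real) \<Rightarrow> real^'n" where
  "pic_vec v g = (\<chi> i. g (v i))"

definition Zset :: "'n::finite set \<Rightarrow> (real^'n) set" where
  "Zset I = {x. \<forall>i. (i \<in> I \<longrightarrow> 0 \<le> x $ i) \<and> (i \<notin> I \<longrightarrow> x $ i \<le> 0)}"

text \<open>Preimage in R^n of the image of Z_I in Pic_R: Z_I + W.\<close>
definition Zpic :: "('n::finite \<Rightarrow> real^3) \<Rightarrow> 'n set \<Rightarrow> (real^'n) set" where
  "Zpic v I = {z + w | z w. z \<in> Zset I \<and> w \<in> M_image v}"

text \<open>Simplicial complex C_I (faces include the empty set).\<close>
definition cplx :: "('n \<Rightarrow> real^3) \<Rightarrow> 'n set set \<Rightarrow> 'n set \<Rightarrow> 'n set set" where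
  "cplx v F I = {J. J \<subseteq> I \<and> (\<exists>S\<in>F. v ` J \<subseteq> cone_of v S)}"

text \<open>Augmented simplicial chain complex with complex coefficients. A chain of
  "size" d (= degree d-1) is a function on faces of cardinality d.\<close>
definition is_chain :: "'n set set \<Rightarrow> nat \<Rightarrow> ('n set \<Rightarrow> complex) \<Rightarrow> bool" where
  "is_chain K d c \<longleftrightarrow> (\<forall>\<sigma>. c \<sigma> \<noteq> 0 \<longrightarrow> \<sigma> \<in> K \<and> card \<sigma> = d)"

definition bdry :: "nat \<Rightarrow> ('n::{finite,linorder} set \<Rightarrow> complex) \<Rightarrow> ('n set \<Rightarrow> complex)" where
  "bdry d c = (\<lambda>\<tau>. if card \<tau> + 1 = d
       then (\<Sum>x\<in>UNIV - \<tau>. (-1) ^ card {u\<in>\<tau>. u < x} * c (insert x \<tau>)) else 0)"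

text \<open>Reduced homology in degree d-1 is nonzero: some cycle is not a boundary.\<close>
definition red_hom_nonzero :: "'n::{finite,linorder} set set \<Rightarrow> nat \<Rightarrow> bool" where
  "red_hom_nonzero K d \<longleftrightarrow>
     (\<exists>c. is_chain K d c \<and> bdry d c = (\<lambda>_. 0) \<and>
          \<not> (\<exists>b. is_chain K (Suc d) b \<and> bdry (Suc d) b = c))"

definition Delta :: "('n::{finite,linorder} \<Rightarrow> real^3) \<Rightarrow> 'n set set \<Rightarrow> 'n set set" where
  "Delta v F = {I. \<exists>d. red_hom_nonzero (cplx v F I) d}"

definition nbrs :: "'n set set \<Rightarrow> 'n \<Rightarrow> 'n set" where
  "nbrs F s = {j. j \<noteq> s \<and> {s, j} \<in> F}"

text \<open>js lists B_s in cyclic (angular) order around v_s: angles of the projections to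
  the plane orthogonal to v_s, w.r.t. an orthonormal frame of that plane, strictly decrease.\<close>
definition cyclic_order_around :: "('n \<Rightarrow> real^3) \<Rightarrow> 'n set set \<Rightarrow> 'n \<Rightarrow> 'n list \<Rightarrow> bool" where
  "cyclic_order_around v F s js \<longleftrightarrow> distinct js \<and> set js = nbrs F s \<and>
     (\<exists>e1 e2. e1 \<bullet> e1 = 1 \<and> e2 \<bullet> e2 = 1 \<and> e1 \<bullet> e2 = 0 \<and> e1 \<bullet> v s = 0 \<and> e2 \<bullet> v s = 0 \<and>
        sorted_wrt (>) (map (\<lambda>j. Arg (Complex (v j \<bullet> e1) (v j \<bullet> e2))) js))"

definition sign_changes :: "(real^3 \<Rightarrow> real) \<Rightarrow> ('n \<Rightarrow> real^3) \<Rightarrow> 'n list \<Rightarrow> nat" where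
  "sign_changes g v js = card {k. k < length js \<and>
      (0 \<le> g (v (js ! k))) \<noteq> (0 \<le> g (v (js ! ((k + 1) mod length js))))}"

end

theory Submission
  imports Defs
begin

text \<open>
  Let \<open>P = {i. g (v i) > 0}\<close>. Adding a small multiple of \<open>\<langle>v s, -\<rangle> \<in> M\<^sub>\<real>\<close> to \<open>L\<close>
  moves it into the interior of \<open>Z\<^sub>P\<close> as well as of \<open>Z\<^bsub>P \<union> {s}\<^esub>\<close>, so neither set lies in \<open>\<Delta>\<close>:
  the complexes \<open>C\<^sub>P\<close> and \<open>C\<^bsub>P \<union> {s}\<^esub>\<close> have vanishing reduced homology. Projecting to the
  plane orthogonal to \<open>v s\<close> shows that the neighbours of \<open>s\<close>, in their cyclic order, form the
  link of \<open>s\<close>: two of them span a cone together with \<open>v s\<close> exactly when they are consecutive.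
  If no neighbour lies in \<open>P\<close>, then \<open>s\<close> is an isolated vertex of \<open>C\<^bsub>P \<union> {s}\<^esub>\<close> (or \<open>P = {}\<close> and
  \<open>C\<^sub>P\<close> is the empty complex). If all of them do, the link is a 1-cycle of \<open>C\<^sub>P\<close>; filling it
  in \<open>C\<^sub>P\<close> and subtracting the cone from \<open>s\<close> gives a 2-cycle of \<open>C\<^bsub>P \<union> {s}\<^esub>\<close> that bounds
  nothing. If \<open>P\<close> meets the link in two separate runs, a path in \<open>C\<^sub>P\<close> between them closes up
  through \<open>s\<close> to a 1-cycle detected by the cocycle counting edges from \<open>s\<close> into one of the runs.
  So \<open>P\<close> meets the link in a single run, i.e. the sign of \<open>g\<close> changes exactly twice.
\<close>

section \<open>Simplicial chains\<close>

definition cobdry :: "('n::{finite,linorder} set \<Rightarrow> complex) \<Rightarrow> 'n set \<Rightarrow> complex" where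
  "cobdry w \<tau> = (\<Sum>x\<in>\<tau>. (-1) ^ card {u\<in>\<tau> - {x}. u < x} * w (\<tau> - {x}))"

lemma sum_mult_bdry_eq_sum_mult_cobdry:
  fixes b :: "'n::{finite,linorder} set \<Rightarrow> complex"
  assumes "is_chain K d b"
  shows "(\<Sum>\<sigma>\<in>UNIV. w \<sigma> * bdry d b \<sigma>) = (\<Sum>\<tau>\<in>UNIV. b \<tau> * cobdry w \<tau>)"
proof -
  have bdry_expand: "w \<sigma> * bdry d b \<sigma>
      = (\<Sum>x\<in>UNIV - \<sigma>. w \<sigma> * (-1) ^ card {u\<in>\<sigma>. u < x} * b (insert x \<sigma>))" for \<sigma>
  proof (cases "card \<sigma> + 1 = d")
    case False
    have "b (insert x \<sigma>) = 0" if "x \<notin> \<sigma>" for x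
      using assms False that unfolding is_chain_def by fastforce
    then show ?thesis using False by (simp add: bdry_def)
  qed (simp add: bdry_def sum_distrib_left mult.assoc)
  have filter_eq: "x \<notin> \<sigma> \<Longrightarrow> {u. (u = x \<or> u \<in> \<sigma>) \<and> u \<noteq> x \<and> u < x} = {u\<in>\<sigma>. u < x}" for x \<sigma>
    by auto
  have "(\<Sum>\<sigma>\<in>UNIV. w \<sigma> * bdry d b \<sigma>)
      = (\<Sum>(\<sigma>,x)\<in>Sigma UNIV (\<lambda>\<sigma>. UNIV - \<sigma>). w \<sigma> * (-1) ^ card {u\<in>\<sigma>. u < x} * b (insert x \<sigma>))"
    unfolding bdry_expand by (rule sum.Sigma) auto
  also have "\<dots> = (\<Sum>(\<tau>,x)\<in>Sigma UNIV (\<lambda>\<tau>. \<tau>). b \<tau> * ((-1) ^ card {u\<in>\<tau> - {x}. u < x} * w (\<tau> - {x})))"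
    by (rule sum.reindex_bij_witness[where i = "\<lambda>(\<tau>,x). (\<tau> - {x}, x)" and j = "\<lambda>(\<sigma>,x). (insert x \<sigma>, x)"])
       (auto simp: insert_absorb mult_ac filter_eq)
  also have "\<dots> = (\<Sum>\<tau>\<in>UNIV. b \<tau> * cobdry w \<tau>)"
    by (simp add: cobdry_def sum_distrib_left sum.Sigma[symmetric])
  finally show ?thesis .
qed

lemma red_hom_nonzeroI:
  fixes c :: "'n::{finite,linorder} set \<Rightarrow> complex"
  assumes "is_chain K d c" "bdry d c = (\<lambda>_. 0)"
    and cocycle: "\<And>\<tau>. \<tau> \<in> K \<Longrightarrow> card \<tau> = Suc d \<Longrightarrow> cobdry w \<tau> = 0"
    and "(\<Sum>\<sigma>\<in>UNIV. w \<sigma> * c \<sigma>) \<noteq> 0"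
  shows "red_hom_nonzero K d"
  unfolding red_hom_nonzero_def
proof (intro exI conjI notI)
  assume "\<exists>b. is_chain K (Suc d) b \<and> bdry (Suc d) b = c"
  then obtain b where b: "is_chain K (Suc d) b" "bdry (Suc d) b = c" by blast
  have "(\<Sum>\<tau>\<in>UNIV. b \<tau> * cobdry w \<tau>) = 0"
    by (rule sum.neutral) (use b(1) cocycle in \<open>force simp: is_chain_def\<close>)
  then show False
    using sum_mult_bdry_eq_sum_mult_cobdry[OF b(1), of w] b(2) assms(4) by simp
qed (use assms in auto)

lemma bdry_diff: "bdry d (\<lambda>\<sigma>. a \<sigma> - b \<sigma>) = (\<lambda>\<tau>. bdry d a \<tau> - bdry d b \<tau>)"
  by (auto simp: bdry_def algebra_simps sum_subtractf)

lemma bdry_sum: "bdry d (\<lambda>\<sigma>. \<Sum>k\<in>A. f k \<sigma>) = (\<lambda>\<tau>. \<Sum>k\<in>A. bdry d (f k) \<tau>)"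
  unfolding bdry_def by (rule ext) (simp add: sum_distrib_left sum.swap[of _ A])

definition unit_chain :: "'n set \<Rightarrow> 'n set \<Rightarrow> complex" where
  "unit_chain \<tau> \<sigma> = (if \<sigma> = \<tau> then 1 else 0)"

lemma sum_unit_chain_mult: "(\<Sum>\<sigma>\<in>(UNIV :: 'n::finite set set). unit_chain \<tau> \<sigma> * f \<sigma>) = f \<tau>"
proof -
  have "(\<Sum>\<sigma>\<in>UNIV. unit_chain \<tau> \<sigma> * f \<sigma>) = (\<Sum>\<sigma>\<in>UNIV. if \<sigma> = \<tau> then f \<sigma> else 0)"
    by (rule sum.cong) (auto simp: unit_chain_def)
  then show ?thesis by simp
qed

lemma bdry_unit_chain_diff:
  fixes x y :: "'n::{finite,linorder}"
  shows "bdry (Suc 0) (\<lambda>\<sigma>. unit_chain {x} \<sigma> - unit_chain {y} \<sigma>) = (\<lambda>_. 0)"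
proof -
  have "(\<Sum>u\<in>UNIV. unit_chain {a} {u}) = (\<Sum>u\<in>UNIV. if u = a then 1 else 0)" for a :: 'n
    by (rule sum.cong) (auto simp: unit_chain_def)
  then show ?thesis by (auto simp: bdry_def sum_subtractf)
qed

definition edge_chain :: "'n::linorder \<Rightarrow> 'n \<Rightarrow> 'n set \<Rightarrow> complex" where
  "edge_chain a b \<sigma> = (if \<sigma> = {a, b} then (if a < b then 1 else -1) else 0)"

lemma bdry_edge_chain:
  fixes a b :: "'n::{finite,linorder}"
  assumes "a \<noteq> b"
  shows "bdry 2 (edge_chain a b) = (\<lambda>\<tau>. unit_chain {b} \<tau> - unit_chain {a} \<tau>)"
proof
  fix \<tau> :: "'n set"
  show "bdry 2 (edge_chain a b) \<tau> = unit_chain {b} \<tau> - unit_chain {a} \<tau>"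
  proof (cases "card \<tau> = 1")
    case True
    then obtain x where x: "\<tau> = {x}" by (auto simp: card_1_singleton_iff)
    have edge_term: "(-1) ^ card {u \<in> {x}. u < y} * edge_chain a b (insert y {x})
        = (if x = b \<and> y = a then 1 else 0) - (if x = a \<and> y = b then 1 else 0)" if "y \<noteq> x" for y
      using assms that by (auto simp: edge_chain_def doubleton_eq_iff Collect_conv_if)
    have "bdry 2 (edge_chain a b) \<tau>
        = (\<Sum>y\<in>UNIV - {x}. (-1) ^ card {u \<in> {x}. u < y} * edge_chain a b (insert y {x}))"
      by (simp add: bdry_def x)
    also have "\<dots> = (\<Sum>y\<in>UNIV - {x}. (if x = b \<and> y = a then 1 else 0) - (if x = a \<and> y = b then 1 else 0))"
      by (rule sum.cong[OF refl]) (rule edge_term, simp)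
    also have "\<dots> = unit_chain {b} \<tau> - unit_chain {a} \<tau>"
      using assms by (cases "x = a"; cases "x = b") (simp_all add: x unit_chain_def sum_subtractf sum_negf)
    finally show ?thesis .
  qed (auto simp: bdry_def unit_chain_def)
qed

definition cone_chain :: "'n::{finite,linorder} \<Rightarrow> ('n set \<Rightarrow> complex) \<Rightarrow> 'n set \<Rightarrow> complex" where
  "cone_chain s z \<tau> = (if s \<in> \<tau> then (-1) ^ card {u\<in>\<tau>. u < s} * z (\<tau> - {s}) else 0)"

lemma cone_chain_insert:
  fixes s :: "'n::{finite,linorder}"
  assumes "s \<in> \<sigma>" "x \<notin> \<sigma>"
  shows "(-1) ^ card {u\<in>\<sigma>. u < x} * cone_chain s z (insert x \<sigma>)
    = - ((-1) ^ card {u\<in>\<sigma>. u < s} * ((-1) ^ card {u\<in>\<sigma> - {s}. u < x} * z (insert x (\<sigma> - {s}))))"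
proof -
  have xs: "x \<noteq> s" using assms by auto
  have "card {u \<in> insert x \<sigma>. u < s} = card {u\<in>\<sigma>. u < s} + (if x < s then 1 else 0)"
  proof -
    have "{u \<in> insert x \<sigma>. u < s} = (if x < s then insert x {u\<in>\<sigma>. u < s} else {u\<in>\<sigma>. u < s})"
      by auto
    then show ?thesis using assms(2) by simp
  qed
  moreover have "card {u\<in>\<sigma>. u < x} = card {u\<in>\<sigma> - {s}. u < x} + (if s < x then 1 else 0)"
  proof -
    have "{u\<in>\<sigma>. u < x} = (if s < x then insert s {u\<in>\<sigma> - {s}. u < x} else {u\<in>\<sigma> - {s}. u < x})"
      using assms(1) xs by auto
    then show ?thesis by simp
  qed
  moreover have "insert x \<sigma> - {s} = insert x (\<sigma> - {s})" using xs by auto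
  ultimately show ?thesis
    using xs assms by (cases "x < s") (auto simp: cone_chain_def power_add)
qed

lemma bdry_cone_chain:
  fixes z :: "'n::{finite,linorder} set \<Rightarrow> complex"
  assumes supp: "\<And>\<sigma>. z \<sigma> \<noteq> 0 \<Longrightarrow> s \<notin> \<sigma> \<and> card \<sigma> = d"
  shows "bdry (Suc d) (cone_chain s z) = (\<lambda>\<tau>. z \<tau> - cone_chain s (bdry d z) \<tau>)"
proof
  fix \<sigma> :: "'n set"
  show "bdry (Suc d) (cone_chain s z) \<sigma> = z \<sigma> - cone_chain s (bdry d z) \<sigma>"
  proof (cases "s \<in> \<sigma>")
    case False
    have "(\<Sum>x\<in>UNIV - \<sigma>. (-1) ^ card {u\<in>\<sigma>. u < x} * cone_chain s z (insert x \<sigma>)) = z \<sigma>"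
    proof -
      have "{u \<in> insert s \<sigma>. u < s} = {u\<in>\<sigma>. u < s}" "insert s \<sigma> - {s} = \<sigma>" using False by auto
      then have "(-1) ^ card {u\<in>\<sigma>. u < x} * cone_chain s z (insert x \<sigma>) = (if x = s then z \<sigma> else 0)"
        if "x \<notin> \<sigma>" for x
        using False that by (auto simp: cone_chain_def simp flip: power_add mult.assoc)
      then show ?thesis using False by (simp add: sum.delta)
    qed
    then show ?thesis using False supp by (cases "card \<sigma> = d") (auto simp: bdry_def cone_chain_def)
  next
    case True
    have z0: "z \<sigma> = 0" using supp True by blast
    have "card \<sigma> > 0" using True by (auto simp: card_gt_0_iff)
    then have card_rem: "card (\<sigma> - {s}) + 1 = card \<sigma>"
      using True by (simp add: card_Diff_singleton)
    have "UNIV - (\<sigma> - {s}) = insert s (UNIV - \<sigma>)" "s \<notin> UNIV - \<sigma>" "z (insert s (\<sigma> - {s})) = 0"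
      using True z0 by (auto simp: insert_absorb)
    then have bdry_rem: "bdry (card \<sigma>) z (\<sigma> - {s})
        = (\<Sum>x\<in>UNIV - \<sigma>. (-1) ^ card {u\<in>\<sigma> - {s}. u < x} * z (insert x (\<sigma> - {s})))"
      using card_rem by (simp add: bdry_def)
    show ?thesis
    proof (cases "card \<sigma> = d")
      case True
      have "bdry (Suc d) (cone_chain s z) \<sigma>
          = (\<Sum>x\<in>UNIV - \<sigma>. (-1) ^ card {u\<in>\<sigma>. u < x} * cone_chain s z (insert x \<sigma>))"
        using True by (simp add: bdry_def)
      also have "\<dots> = (\<Sum>x\<in>UNIV - \<sigma>. - ((-1) ^ card {u\<in>\<sigma>. u < s}
          * ((-1) ^ card {u\<in>\<sigma> - {s}. u < x} * z (insert x (\<sigma> - {s})))))"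
        by (rule sum.cong) (simp_all add: cone_chain_insert[OF \<open>s \<in> \<sigma>\<close>])
      also have "\<dots> = - ((-1) ^ card {u\<in>\<sigma>. u < s} * bdry d z (\<sigma> - {s}))"
        by (simp add: bdry_rem[unfolded True] sum_negf sum_distrib_left)
      finally show ?thesis using \<open>s \<in> \<sigma>\<close> z0 by (simp add: cone_chain_def)
    qed (use True z0 card_rem in \<open>auto simp: bdry_def cone_chain_def\<close>)
  qed
qed

lemma cycle_diff_cone_chain:
  fixes z :: "'n::{finite,linorder} set \<Rightarrow> complex"
  assumes "\<And>\<sigma>. z \<sigma> \<noteq> 0 \<Longrightarrow> s \<notin> \<sigma> \<and> card \<sigma> = d"
    and "bdry d z = (\<lambda>_. 0)" "bdry (Suc d) b = z"
  shows "bdry (Suc d) (\<lambda>\<sigma>. b \<sigma> - cone_chain s z \<sigma>) = (\<lambda>_. 0)"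
proof -
  have "bdry (Suc d) (cone_chain s z) = (\<lambda>\<tau>. z \<tau> - cone_chain s (bdry d z) \<tau>)"
    by (rule bdry_cone_chain) (use assms(1) in blast)
  also have "\<dots> = z" using assms(2) by (intro ext) (simp add: cone_chain_def)
  finally have "bdry (Suc d) (cone_chain s z) = z" .
  then show ?thesis using assms(3) by (simp add: bdry_diff)
qed

lemma is_chain_mono: "is_chain K d c \<Longrightarrow> K \<subseteq> K' \<Longrightarrow> is_chain K' d c"
  unfolding is_chain_def by blast

lemma is_chain_diff:
  assumes "is_chain K d a" "is_chain K d b"
  shows "is_chain K d (\<lambda>\<sigma>. a \<sigma> - b \<sigma>)"
  using assms unfolding is_chain_def by (metis diff_zero)

lemma boundary_if_not_red_hom_nonzero:
  assumes "\<not> red_hom_nonzero K d" "is_chain K d c" "bdry d c = (\<lambda>_. 0)"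
  obtains b where "is_chain K (Suc d) b" "bdry (Suc d) b = c"
  using assms unfolding red_hom_nonzero_def by blast

lemma red_hom_nonzero_empty:
  fixes F :: "'n::{finite,linorder} set set"
  assumes "{} \<in> F"
  shows "red_hom_nonzero (Pow {} \<inter> F) 0"
proof (rule red_hom_nonzeroI[where c = "unit_chain {}" and w = "unit_chain {}"])
  show "is_chain (Pow {} \<inter> F) 0 (unit_chain {})"
    using assms by (auto simp: is_chain_def unit_chain_def)
  show "(\<Sum>\<sigma>\<in>UNIV. unit_chain ({} :: 'n set) \<sigma> * unit_chain {} \<sigma>) \<noteq> 0"
    by (subst sum_unit_chain_mult) (simp add: unit_chain_def)
qed (auto simp: bdry_def)

lemma red_hom_nonzero_isolated_vertex:
  fixes s :: "'n::{finite,linorder}"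
  assumes "{s} \<in> F" "{p} \<in> F" "s \<notin> P" "p \<in> P" "\<forall>x\<in>P. {s, x} \<notin> F"
  shows "red_hom_nonzero (Pow (insert s P) \<inter> F) 1"
proof (rule red_hom_nonzeroI[where c = "\<lambda>\<sigma>. unit_chain {s} \<sigma> - unit_chain {p} \<sigma>" and w = "unit_chain {s}"])
  show "is_chain (Pow (insert s P) \<inter> F) 1 (\<lambda>\<sigma>. unit_chain {s} \<sigma> - unit_chain {p} \<sigma>)"
    using assms(1-4) by (auto simp: is_chain_def unit_chain_def split: if_splits)
  show "bdry 1 (\<lambda>\<sigma>. unit_chain {s} \<sigma> - unit_chain {p} \<sigma>) = (\<lambda>_. 0)"
    using bdry_unit_chain_diff by simp
  show "cobdry (unit_chain {s}) \<tau> = 0" if "\<tau> \<in> Pow (insert s P) \<inter> F" "card \<tau> = Suc 1" for \<tau>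
    unfolding cobdry_def
  proof (rule sum.neutral, intro ballI)
    fix x assume "x \<in> \<tau>"
    have "\<tau> - {x} \<noteq> {s}"
    proof
      assume "\<tau> - {x} = {s}"
      then have "\<tau> = {s, x}" "x \<noteq> s" using \<open>x \<in> \<tau>\<close> that(2) by (auto simp: card_2_iff)
      then show False using that(1) assms(5) by auto
    qed
    then show "(-1) ^ card {u \<in> \<tau> - {x}. u < x} * unit_chain {s} (\<tau> - {x}) = 0"
      by (simp add: unit_chain_def)
  qed
  show "(\<Sum>\<sigma>\<in>UNIV. unit_chain {s} \<sigma> * (unit_chain {s} \<sigma> - unit_chain {p} \<sigma>)) \<noteq> 0"
    using assms(3,4) by (subst sum_unit_chain_mult) (auto simp: unit_chain_def)
qed

text \<open>The two faces \<open>{s, q}\<close> and \<open>{s, p}\<close> of the triangle \<open>{s, p, q}\<close> enter its coboundary with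
  opposite signs.\<close>

lemma edge_signs_cancel:
  fixes s p q :: "'n::linorder"
  assumes "s \<noteq> p" "s \<noteq> q" "p \<noteq> q"
  shows "(-1::complex) ^ card {u \<in> {s, q}. u < p} * (-1) ^ card {u \<in> {s, q}. u < s}
       + (-1) ^ card {u \<in> {s, p}. u < q} * (-1) ^ card {u \<in> {s, p}. u < s} = 0"
proof -
  have card_pair: "card {u \<in> {a, b}. u < c} = (if a < c then 1 else 0) + (if b < c then 1 else 0)"
    if "a \<noteq> b" for a b c :: 'n
  proof -
    have "{u \<in> {a, b}. u < c} = (if a < c then {a} else {}) \<union> (if b < c then {b} else {})" by auto
    then show ?thesis using that by auto
  qed
  show ?thesis
    unfolding card_pair[OF assms(2)] card_pair[OF assms(1)] using assms
    by (cases rule: linorder_cases[of s p]; cases rule: linorder_cases[of s q];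
        cases rule: linorder_cases[of p q]) auto
qed

lemma cone_chain_unit_chain:
  fixes s j :: "'n::{finite,linorder}"
  assumes "s \<noteq> j"
  shows "cone_chain s (unit_chain {j}) \<sigma> = (if \<sigma> = {s, j} then (-1) ^ card {u \<in> \<sigma>. u < s} else 0)"
proof -
  have "s \<in> \<sigma> \<and> \<sigma> - {s} = {j} \<longleftrightarrow> \<sigma> = {s, j}" using assms by auto
  then show ?thesis by (auto simp: cone_chain_def unit_chain_def)
qed

section \<open>Fans and the sign complexes\<close>

lemma complete_simplicial_fanD:
  assumes "complete_simplicial_fan v F"
  shows "{} \<in> F" "\<And>S T. S \<in> F \<Longrightarrow> T \<subseteq> S \<Longrightarrow> T \<in> F" "\<And>i. {i} \<in> F"
    "\<And>S. S \<in> F \<Longrightarrow> inj_on v S" "\<And>S. S \<in> F \<Longrightarrow> independent (v ` S)"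
    "\<And>S T. S \<in> F \<Longrightarrow> T \<in> F \<Longrightarrow> cone_of v S \<inter> cone_of v T = cone_of v (S \<inter> T)"
    "(\<Union>S\<in>F. cone_of v S) = UNIV"
  using assms unfolding complete_simplicial_fan_def by blast+

lemma zero_mem_cone_of: "0 \<in> cone_of v S"
  unfolding cone_of_def by (rule CollectI, rule exI[of _ "\<lambda>_. 0"]) simp

lemma ray_mem_cone_of:
  fixes v :: "'n::finite \<Rightarrow> real^3"
  assumes "i \<in> S"
  shows "v i \<in> cone_of v S"
proof -
  have "(\<Sum>j\<in>S. (if j = i then 1 else 0) *\<^sub>R v j) = (\<Sum>j\<in>S. if j = i then v j else 0)"
    by (rule sum.cong) auto
  also have "\<dots> = v i" using assms by simp
  finally have "(\<Sum>j\<in>S. (if j = i then 1 else 0) *\<^sub>R v j) = v i" .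
  then show ?thesis unfolding cone_of_def by (intro CollectI exI[of _ "\<lambda>j. if j = i then 1 else 0"]) auto
qed

lemma cone_of_add:
  assumes "x \<in> cone_of v S" "y \<in> cone_of v S"
  shows "x + y \<in> cone_of v S"
proof -
  obtain c where c: "\<forall>i\<in>S. 0 \<le> c i" "x = (\<Sum>i\<in>S. c i *\<^sub>R v i)"
    using assms(1) unfolding cone_of_def by blast
  obtain d where d: "\<forall>i\<in>S. 0 \<le> d i" "y = (\<Sum>i\<in>S. d i *\<^sub>R v i)"
    using assms(2) unfolding cone_of_def by blast
  have "x + y = (\<Sum>i\<in>S. (c i + d i) *\<^sub>R v i)"
    unfolding c(2) d(2) by (simp add: sum.distrib scaleR_add_left)
  moreover have "\<forall>i\<in>S. 0 \<le> c i + d i" using c(1) d(1) by auto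
  ultimately show ?thesis unfolding cone_of_def by (intro CollectI exI[of _ "\<lambda>i. c i + d i"]) simp
qed

lemma cone_of_scale:
  assumes "x \<in> cone_of v S" "0 \<le> a"
  shows "a *\<^sub>R x \<in> cone_of v S"
proof -
  obtain c where c: "\<forall>i\<in>S. 0 \<le> c i" "x = (\<Sum>i\<in>S. c i *\<^sub>R v i)"
    using assms(1) unfolding cone_of_def by blast
  have "a *\<^sub>R x = (\<Sum>i\<in>S. (a * c i) *\<^sub>R v i)" unfolding c(2) by (simp add: scaleR_sum_right)
  moreover have "\<forall>i\<in>S. 0 \<le> a * c i" using c(1) assms(2) by auto
  ultimately show ?thesis unfolding cone_of_def by (intro CollectI exI[of _ "\<lambda>i. a * c i"]) simp
qed

lemma convex_cone_cone_of: "convex_cone (cone_of v S)"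
proof -
  have "convex (cone_of v S)"
    unfolding convex_def by (intro ballI allI impI cone_of_add cone_of_scale) auto
  moreover have "conic (cone_of v S)"
    unfolding conic_def by (intro allI impI cone_of_scale) auto
  ultimately show ?thesis unfolding convex_cone_def using zero_mem_cone_of by blast
qed

lemma cone_of_eq_convex_cone_hull:
  fixes v :: "'n::finite \<Rightarrow> real^3"
  shows "cone_of v S = convex_cone hull (v ` S)"
proof
  have "(\<Sum>i\<in>A. c i *\<^sub>R v i) \<in> convex_cone hull (v ` S)" if "A \<subseteq> S" "\<forall>i\<in>A. 0 \<le> c i" for A c
    using finite[of A] that
  proof (induction A rule: finite_induct)
    case (insert x A)
    then show ?case
      by (simp add: convex_cone_hull_add convex_cone_hull_mul hull_inc)
  qed (simp add: convex_cone_hull_contains_0)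
  then show "cone_of v S \<subseteq> convex_cone hull (v ` S)"
    unfolding cone_of_def by blast
  show "convex_cone hull (v ` S) \<subseteq> cone_of v S"
    by (rule hull_minimal) (auto simp: ray_mem_cone_of convex_cone_cone_of)
qed

lemma closed_cone_of:
  fixes v :: "'n::finite \<Rightarrow> real^3"
  shows "closed (cone_of v S)"
  by (simp add: cone_of_eq_convex_cone_hull closed_convex_cone_hull)

context
  fixes v :: "'n::finite \<Rightarrow> real^3" and F :: "'n set set"
  assumes fan: "complete_simplicial_fan v F"
begin

lemma fan_ray_nonzero: "v i \<noteq> 0"
proof
  assume "v i = 0"
  then have "0 \<in> v ` {i}" by simp
  then have "dependent (v ` {i})" using dependent_zero by blast
  then show False using complete_simplicial_fanD(5)[OF fan complete_simplicial_fanD(3)[OF fan]] by blast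
qed

lemma fan_ray_mem_coneD:
  assumes "S \<in> F" "v i \<in> cone_of v S"
  shows "i \<in> S"
proof (rule ccontr)
  assume "i \<notin> S"
  then have "{i} \<inter> S = {}" by auto
  moreover have "cone_of v {} = {0}" by (auto simp: cone_of_def)
  ultimately have "cone_of v {i} \<inter> cone_of v S = {0}"
    using complete_simplicial_fanD(6)[OF fan complete_simplicial_fanD(3)[OF fan] assms(1)] by metis
  moreover have "v i \<in> cone_of v {i}" by (rule ray_mem_cone_of) simp
  ultimately show False using assms(2) fan_ray_nonzero by blast
qed

lemma inj_fan_rays: "inj v"
proof (rule injI)
  fix i j assume "v i = v j"
  then have "v i \<in> cone_of v {j}" using ray_mem_cone_of[of j "{j}" v] by simp
  then show "i = j" using fan_ray_mem_coneD[OF complete_simplicial_fanD(3)[OF fan]] by blast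
qed

lemma cplx_fan_eq: "cplx v F I = Pow I \<inter> F"
proof (intro set_eqI iffI)
  fix J assume "J \<in> cplx v F I"
  then obtain S where S: "J \<subseteq> I" "S \<in> F" "v ` J \<subseteq> cone_of v S" unfolding cplx_def by blast
  then have "J \<subseteq> S" using fan_ray_mem_coneD by blast
  then show "J \<in> Pow I \<inter> F" using S complete_simplicial_fanD(2)[OF fan] by blast
next
  fix J assume "J \<in> Pow I \<inter> F"
  then show "J \<in> cplx v F I" unfolding cplx_def using ray_mem_cone_of[of _ J v] by blast
qed

lemma fan_face_card_le:
  assumes "S \<in> F"
  shows "card S \<le> 3"
proof -
  have "card S = card (v ` S)"
    using complete_simplicial_fanD(4)[OF fan assms] by (simp add: card_image)
  also have "\<dots> \<le> DIM(real^3)"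
    using independent_bound complete_simplicial_fanD(5)[OF fan assms] by blast
  finally show ?thesis by simp
qed

end

lemma interior_ZpicI:
  fixes v :: "'n::finite \<Rightarrow> real^3" and L :: "real^'n"
  assumes "\<And>i. (i \<in> I \<longrightarrow> L$i - w \<bullet> v i > 0) \<and> (i \<notin> I \<longrightarrow> L$i - w \<bullet> v i < 0)"
  shows "L \<in> interior (Zpic v I)"
proof -
  define x where "x = L - (\<chi> i. w \<bullet> v i)"
  have "x$i \<noteq> 0" for i using assms[of i] by (auto simp: x_def)
  define \<delta> where "\<delta> = Min (range (\<lambda>i. \<bar>x$i\<bar>))"
  have \<delta>: "\<delta> > 0" "\<And>i. \<delta> \<le> \<bar>x$i\<bar>"
    unfolding \<delta>_def using \<open>\<And>i. x$i \<noteq> 0\<close> by (subst Min_gr_iff) auto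
  have "ball L \<delta> \<subseteq> Zpic v I"
  proof
    fix y assume "y \<in> ball L \<delta>"
    then have near: "\<bar>(y - L)$i\<bar> < \<delta>" for i
      using component_le_norm_cart[of "y - L" i] by (simp add: dist_norm norm_minus_commute)
    have "y - (\<chi> i. w \<bullet> v i) \<in> Zset I"
      unfolding Zset_def
    proof (intro CollectI allI conjI impI)
      fix i
      have "(y - (\<chi> i. w \<bullet> v i))$i = x$i + (y - L)$i" by (simp add: x_def)
      moreover have "i \<in> I \<Longrightarrow> x$i > 0" "i \<notin> I \<Longrightarrow> x$i < 0" using assms[of i] by (auto simp: x_def)
      ultimately show "i \<in> I \<Longrightarrow> 0 \<le> (y - (\<chi> i. w \<bullet> v i))$i"
        and "i \<notin> I \<Longrightarrow> (y - (\<chi> i. w \<bullet> v i))$i \<le> 0"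
        using near[of i] \<delta>(2)[of i] by linarith+
    qed
    moreover have "(\<chi> i. w \<bullet> v i) \<in> M_image v" unfolding M_image_def by blast
    ultimately show "y \<in> Zpic v I" unfolding Zpic_def by force
  qed
  then show ?thesis using \<delta>(1) by (meson interior_maximal open_ball centre_in_ball subsetD)
qed

lemma exists_pos_mult_abs_less:
  fixes a b :: "'n::finite \<Rightarrow> real"
  assumes "\<forall>i. i \<noteq> s \<longrightarrow> b i \<noteq> 0"
  shows "\<exists>\<epsilon>>0. \<forall>i. i \<noteq> s \<longrightarrow> \<epsilon> * \<bar>a i\<bar> < \<bar>b i\<bar>"
proof -
  define \<epsilon> where "\<epsilon> = Min (insert 1 ((\<lambda>i. \<bar>b i\<bar> / (\<bar>a i\<bar> + 1)) ` (UNIV - {s})))"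
  have "\<epsilon> > 0" unfolding \<epsilon>_def using assms by (subst Min_gr_iff) auto
  moreover have "\<epsilon> * \<bar>a i\<bar> < \<bar>b i\<bar>" if "i \<noteq> s" for i
  proof -
    have "\<epsilon> \<le> \<bar>b i\<bar> / (\<bar>a i\<bar> + 1)" unfolding \<epsilon>_def by (rule Min_le) (use that in auto)
    then have "\<epsilon> * \<bar>a i\<bar> \<le> \<bar>b i\<bar> / (\<bar>a i\<bar> + 1) * \<bar>a i\<bar>" by (rule mult_right_mono) simp
    also have "\<dots> < \<bar>b i\<bar>" using assms that by (simp add: field_simps)
    finally show ?thesis .
  qed
  ultimately show ?thesis by blast
qed

lemma sign_diff_of_abs_less:
  fixes a t :: real
  assumes "\<bar>t\<bar> < \<bar>a\<bar>"
  shows "0 < a - t \<longleftrightarrow> 0 < a" and "a - t < 0 \<longleftrightarrow> a < 0"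
  using assms by arith+

lemma pic_vec_in_interior_Zpic_signs:
  fixes v :: "'n::finite \<Rightarrow> real^3" and g :: "real^3 \<Rightarrow> real"
  assumes "v s \<noteq> 0" "g (v s) = 0" "\<forall>i. i \<noteq> s \<longrightarrow> g (v i) \<noteq> 0"
  shows "pic_vec v g \<in> interior (Zpic v {i. g (v i) > 0})"
    and "pic_vec v g \<in> interior (Zpic v (insert s {i. g (v i) > 0}))"
proof -
  obtain \<epsilon> where \<epsilon>: "\<epsilon> > 0" "\<And>i. i \<noteq> s \<Longrightarrow> \<bar>\<epsilon> * (v s \<bullet> v i)\<bar> < \<bar>g (v i)\<bar>"
    using exists_pos_mult_abs_less[OF assms(3), of "\<lambda>i. v s \<bullet> v i"] by (auto simp: abs_mult)
  have same_sign: "(0 < g (v i) - c * (v s \<bullet> v i) \<longleftrightarrow> 0 < g (v i))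
      \<and> (g (v i) - c * (v s \<bullet> v i) < 0 \<longleftrightarrow> g (v i) < 0)" if "i \<noteq> s" "\<bar>c\<bar> = \<epsilon>" for i c
  proof -
    have "\<bar>c * (v s \<bullet> v i)\<bar> < \<bar>g (v i)\<bar>" using \<epsilon>(2)[OF that(1)] that(2) by (simp add: abs_mult)
    from sign_diff_of_abs_less[OF this] show ?thesis by blast
  qed
  have "v s \<bullet> v s > 0" using assms(1) by simp
  then have at_s: "\<epsilon> * (v s \<bullet> v s) > 0" using \<epsilon>(1) by simp
  show "pic_vec v g \<in> interior (Zpic v {i. g (v i) > 0})"
  proof (rule interior_ZpicI[where w = "\<epsilon> *\<^sub>R v s"])
    fix i
    show "(i \<in> {i. g (v i) > 0} \<longrightarrow> pic_vec v g $ i - (\<epsilon> *\<^sub>R v s) \<bullet> v i > 0)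
        \<and> (i \<notin> {i. g (v i) > 0} \<longrightarrow> pic_vec v g $ i - (\<epsilon> *\<^sub>R v s) \<bullet> v i < 0)"
      using same_sign[of i \<epsilon>] \<epsilon>(1) at_s assms(2) assms(3)[rule_format, of i] by (cases "i = s") (simp_all add: pic_vec_def)
  qed
  show "pic_vec v g \<in> interior (Zpic v (insert s {i. g (v i) > 0}))"
  proof (rule interior_ZpicI[where w = "(- \<epsilon>) *\<^sub>R v s"])
    fix i
    show "(i \<in> insert s {i. g (v i) > 0} \<longrightarrow> pic_vec v g $ i - ((- \<epsilon>) *\<^sub>R v s) \<bullet> v i > 0)
        \<and> (i \<notin> insert s {i. g (v i) > 0} \<longrightarrow> pic_vec v g $ i - ((- \<epsilon>) *\<^sub>R v s) \<bullet> v i < 0)"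
      using same_sign[of i "- \<epsilon>"] \<epsilon>(1) at_s assms(2) assms(3)[rule_format, of i] by (cases "i = s") (simp_all add: pic_vec_def)
  qed
qed

lemma sign_complexes_acyclic:
  fixes v :: "'n::{finite,linorder} \<Rightarrow> real^3" and g :: "real^3 \<Rightarrow> real"
  assumes "complete_simplicial_fan v F"
    and "\<forall>I\<in>Delta v F. pic_vec v g \<notin> interior (Zpic v I)"
    and "g (v s) = 0" "\<forall>i. i \<noteq> s \<longrightarrow> g (v i) \<noteq> 0"
  shows "\<not> red_hom_nonzero (Pow {i. g (v i) > 0} \<inter> F) d"
    and "\<not> red_hom_nonzero (Pow (insert s {i. g (v i) > 0}) \<inter> F) d"
proof -
  have "{i. g (v i) > 0} \<notin> Delta v F" "insert s {i. g (v i) > 0} \<notin> Delta v F"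
    using assms(2) pic_vec_in_interior_Zpic_signs[OF fan_ray_nonzero[OF assms(1)] assms(3,4)] by blast+
  then show "\<not> red_hom_nonzero (Pow {i. g (v i) > 0} \<inter> F) d"
    and "\<not> red_hom_nonzero (Pow (insert s {i. g (v i) > 0}) \<inter> F) d"
    by (simp_all add: Delta_def cplx_fan_eq[OF assms(1)])
qed

section \<open>Sectors\<close>

lemma sin_diff_pos_iff:
  assumes "-pi < a" "a \<le> pi" "-pi < b" "b \<le> pi"
  shows "0 < sin (a - b) \<longleftrightarrow> 0 < a - b \<and> a - b < pi \<or> a - b < -pi"
proof -
  consider "0 < a - b \<and> a - b < pi" | "a - b < -pi" | "-pi < a - b \<and> a - b < 0" | "pi < a - b"
    | "a - b = 0 \<or> a - b = pi \<or> a - b = -pi" by linarith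
  then show ?thesis
  proof cases
    case 1 then show ?thesis using sin_gt_zero[of "a - b"] by auto
  next
    case 2
    have "sin (a - b) = sin (-(a - b + pi))" by (simp only: sin_minus sin_periodic_pi minus_minus)
    moreover have "sin (-(a - b + pi)) > 0" using 2 assms by (intro sin_gt_zero) auto
    ultimately show ?thesis using 2 by simp
  next
    case 3
    have "sin (a - b) = - sin (b - a)" by (metis minus_diff_eq sin_minus)
    moreover have "sin (b - a) > 0" using 3 by (intro sin_gt_zero) auto
    ultimately show ?thesis using 3 by simp
  next
    case 4
    have "sin (a - b) = - sin (a - b - pi)" by (simp add: sin_diff)
    moreover have "sin (a - b - pi) > 0" using 4 assms by (intro sin_gt_zero) auto
    moreover have "\<not> a - b < -pi" using 4 pi_gt_zero by linarith
    ultimately show ?thesis using 4 by auto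
  qed auto
qed

lemma sin_diff_neg_iff:
  assumes "-pi < a" "a \<le> pi" "-pi < b" "b \<le> pi"
  shows "sin (a - b) < 0 \<longleftrightarrow> -pi < a - b \<and> a - b < 0 \<or> pi < a - b"
proof -
  have "sin (a - b) = - sin (b - a)" by (metis minus_diff_eq sin_minus)
  then show ?thesis using sin_diff_pos_iff[of b a] assms by auto
qed

text \<open>For angles \<open>P \<noteq> Q\<close> in \<open>(-pi, pi]\<close> that are not antipodal, \<open>in_sector P Q X\<close> says that \<open>X\<close>
  lies strictly inside the sector of opening less than \<open>pi\<close> bounded by \<open>P\<close> and \<open>Q\<close>.\<close>

definition in_sector :: "real \<Rightarrow> real \<Rightarrow> real \<Rightarrow> bool" where
  "in_sector P Q X \<longleftrightarrow> 0 < sin (Q - X) * sin (Q - P) \<and> 0 < sin (X - P) * sin (Q - P)"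

definition in_closed_sector :: "real \<Rightarrow> real \<Rightarrow> real \<Rightarrow> bool" where
  "in_closed_sector P Q X \<longleftrightarrow> 0 \<le> sin (Q - X) * sin (Q - P) \<and> 0 \<le> sin (X - P) * sin (Q - P)"

lemma in_sector_imp_in_closed_sector: "in_sector P Q X \<Longrightarrow> in_closed_sector P Q X"
  unfolding in_sector_def in_closed_sector_def by auto

lemma in_sector_commute: "in_sector P Q X \<longleftrightarrow> in_sector Q P X"
proof -
  have "sin (P - X) = - sin (X - P)" "sin (P - Q) = - sin (Q - P)" "sin (X - Q) = - sin (Q - X)"
    by (metis minus_diff_eq sin_minus)+
  then show ?thesis unfolding in_sector_def by (auto simp: mult.commute)
qed

lemma in_closed_sector_short_arc:
  assumes "-pi < B" "B < C" "C < A" "A \<le> pi" "A - B < pi"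
  shows "in_closed_sector A B C"
proof -
  have "sin (B - C) < 0" "sin (B - A) < 0" "sin (C - A) < 0"
    using assms by (subst sin_diff_neg_iff; linarith)+
  then show ?thesis unfolding in_closed_sector_def by (simp add: zero_le_mult_iff)
qed

lemma in_closed_sector_long_arc:
  assumes "-pi < B" "B < A" "A \<le> pi" "A - B > pi" "-pi < C" "C \<le> pi" "C > A \<or> C < B"
  shows "in_closed_sector A B C"
proof -
  have "sin (B - C) > 0" "sin (B - A) > 0" "sin (C - A) > 0"
    using assms by (subst sin_diff_pos_iff; linarith)+
  then show ?thesis unfolding in_closed_sector_def by (simp add: zero_le_mult_iff)
qed

lemma in_sector_iff_diffs:
  assumes "-pi < P" "P \<le> pi" "-pi < Q" "Q \<le> pi" "-pi < X" "X \<le> pi"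
  shows "in_sector P Q X \<longleftrightarrow>
    ((0 < Q - X \<and> Q - X < pi \<or> Q - X < -pi) \<and> (0 < Q - P \<and> Q - P < pi \<or> Q - P < -pi) \<or>
     (-pi < Q - X \<and> Q - X < 0 \<or> pi < Q - X) \<and> (-pi < Q - P \<and> Q - P < 0 \<or> pi < Q - P)) \<and>
    ((0 < X - P \<and> X - P < pi \<or> X - P < -pi) \<and> (0 < Q - P \<and> Q - P < pi \<or> Q - P < -pi) \<or>
     (-pi < X - P \<and> X - P < 0 \<or> pi < X - P) \<and> (-pi < Q - P \<and> Q - P < 0 \<or> pi < Q - P))"
  unfolding in_sector_def zero_less_mult_iff using assms by (simp add: sin_diff_pos_iff sin_diff_neg_iff)

lemma in_sector_gap_bounds:
  assumes b: "-pi < P" "P \<le> pi" "-pi < Q" "Q \<le> pi" "-pi < A" "A \<le> pi" "-pi < B" "B \<le> pi"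
    and "B < \<phi>" "\<phi> < A" "P \<le> B \<or> A \<le> P" "Q \<le> B \<or> A \<le> Q" "in_sector P Q \<phi>"
  shows "(A = P \<or> A = Q \<or> in_sector P Q A) \<and> (B = P \<or> B = Q \<or> in_sector P Q B)"
  using assms(9-13) b
  unfolding in_sector_iff_diffs[OF b(1-4) b(5,6)] in_sector_iff_diffs[OF b(1-4) b(7,8)]
    in_sector_iff_diffs[OF b(1-4), of \<phi>, OF order.strict_trans[OF b(7) assms(9)]
      order.trans[OF less_imp_le[OF assms(10)] b(6)]]
  by linarith

lemma in_sector_wrap_gap_bounds:
  assumes b: "-pi < P" "P \<le> pi" "-pi < Q" "Q \<le> pi" "-pi < A" "A \<le> pi" "-pi < B" "B \<le> pi"
    and "-pi < \<phi>" "\<phi> < B" "B \<le> P" "P \<le> A" "B \<le> Q" "Q \<le> A" "in_sector P Q \<phi>"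
  shows "(A = P \<or> A = Q \<or> in_sector P Q A) \<and> (B = P \<or> B = Q \<or> in_sector P Q B)"
  using assms(9-15) b
  unfolding in_sector_iff_diffs[OF b(1-4) b(5,6)] in_sector_iff_diffs[OF b(1-4) b(7,8)]
    in_sector_iff_diffs[OF b(1-4) assms(9) order.trans[OF less_imp_le[OF assms(10)] b(8)]]
  by linarith

lemma not_in_sector_both_gaps:
  assumes b: "-pi < A" "A \<le> pi" "-pi < B" "B \<le> pi"
    and "B < \<phi>1" "\<phi>1 < A" "-pi < \<phi>2" "\<phi>2 < B"
  shows "\<not> (in_sector A B \<phi>1 \<and> in_sector A B \<phi>2)"
  using assms
  unfolding in_sector_iff_diffs[OF b, of \<phi>1, OF order.strict_trans[OF b(3) assms(5)]
      order.trans[OF less_imp_le[OF assms(6)] b(2)]]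
    in_sector_iff_diffs[OF b assms(7) order.trans[OF less_imp_le[OF assms(8)] b(4)]]
  by linarith

lemma Im_cnj_mult_polar:
  fixes a b :: complex
  assumes "a \<noteq> 0" "b \<noteq> 0"
  shows "Im (cnj a * b) = cmod a * cmod b * sin (Arg b - Arg a)"
proof -
  have "Re a = cmod a * cos (Arg a)" "Im a = cmod a * sin (Arg a)"
    "Re b = cmod b * cos (Arg b)" "Im b = cmod b * sin (Arg b)"
    using assms cos_Arg sin_Arg by auto
  then show ?thesis by (simp add: sin_diff algebra_simps)
qed

lemma Im_cnj_mult_prod_sign:
  fixes a b c d :: complex
  assumes "a \<noteq> 0" "b \<noteq> 0" "c \<noteq> 0" "d \<noteq> 0"
  shows "0 < Im (cnj a * b) * Im (cnj c * d) \<longleftrightarrow> 0 < sin (Arg b - Arg a) * sin (Arg d - Arg c)"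
    and "0 \<le> Im (cnj a * b) * Im (cnj c * d) \<longleftrightarrow> 0 \<le> sin (Arg b - Arg a) * sin (Arg d - Arg c)"
proof -
  define M where "M = cmod a * cmod b * cmod c * cmod d"
  have M: "0 < M" using assms by (simp add: M_def)
  have eq: "Im (cnj a * b) * Im (cnj c * d) = M * (sin (Arg b - Arg a) * sin (Arg d - Arg c))"
    unfolding M_def Im_cnj_mult_polar[OF assms(1,2)] Im_cnj_mult_polar[OF assms(3,4)] by (simp only: mult_ac)
  show "0 < Im (cnj a * b) * Im (cnj c * d) \<longleftrightarrow> 0 < sin (Arg b - Arg a) * sin (Arg d - Arg c)"
    unfolding eq using M mult_pos_pos zero_less_mult_pos by blast
  show "0 \<le> Im (cnj a * b) * Im (cnj c * d) \<longleftrightarrow> 0 \<le> sin (Arg b - Arg a) * sin (Arg d - Arg c)"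
    unfolding eq using M by (metis linorder_not_less mult_nonneg_nonneg mult_pos_neg order_less_imp_le)
qed

lemma complex_eq_Im_cnj_comb:
  fixes a b w :: complex
  assumes "Im (cnj a * b) \<noteq> 0"
  shows "w = of_real (Im (cnj w * b) / Im (cnj a * b)) * a + of_real (Im (cnj a * w) / Im (cnj a * b)) * b"
proof -
  define D where "D = Re a * Im b - Im a * Re b"
  define n1 where "n1 = Re w * Im b - Im w * Re b"
  define n2 where "n2 = Re a * Im w - Im a * Re w"
  have "D \<noteq> 0" using assms by (simp add: D_def)
  moreover have "n1 * Re a + n2 * Re b = Re w * D" "n1 * Im a + n2 * Im b = Im w * D"
    by (simp_all add: n1_def n2_def D_def algebra_simps)
  ultimately have "w = of_real (n1 / D) * a + of_real (n2 / D) * b"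
    by (simp add: complex_eq_iff add_divide_distrib[symmetric])
  then show ?thesis by (simp add: D_def n1_def n2_def)
qed

lemma nonneg_comb_if_in_closed_sector:
  fixes a b c :: complex
  assumes "a \<noteq> 0" "b \<noteq> 0" "c \<noteq> 0" "Im (cnj a * b) \<noteq> 0"
    and "in_closed_sector (Arg a) (Arg b) (Arg c)"
  obtains \<alpha> \<beta> where "0 \<le> \<alpha>" "0 \<le> \<beta>" "c = of_real \<alpha> * a + of_real \<beta> * b"
proof -
  let ?X = "Im (cnj a * b)"
  have "0 \<le> Im (cnj c * b) * ?X" "0 \<le> Im (cnj a * c) * ?X"
    using assms(5) unfolding in_closed_sector_def Im_cnj_mult_prod_sign[OF assms(3,2,1,2)]
      Im_cnj_mult_prod_sign[OF assms(1,3,1,2)] by simp_all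
  then have "0 \<le> Im (cnj c * b) / ?X" "0 \<le> Im (cnj a * c) / ?X"
    using assms(4) by (auto simp only: zero_le_mult_iff zero_le_divide_iff)
  from this complex_eq_Im_cnj_comb[OF assms(4), of c] show ?thesis by (rule that)
qed

lemma in_sector_if_pos_comb:
  fixes a b d :: complex
  assumes "a \<noteq> 0" "b \<noteq> 0" "Im (cnj a * b) \<noteq> 0" "0 < \<alpha>" "0 < \<beta>"
    and d: "d = of_real \<alpha> * a + of_real \<beta> * b"
  shows "in_sector (Arg a) (Arg b) (Arg d)"
proof -
  let ?X = "Im (cnj a * b)"
  have cross: "Im (cnj d * b) = \<alpha> * ?X" "Im (cnj a * d) = \<beta> * ?X"
    by (simp_all add: d algebra_simps)
  then have "d \<noteq> 0" using assms(3,4) by auto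
  have "0 < ?X * ?X" using assms(3) not_real_square_gt_zero by blast
  then have "0 < Im (cnj d * b) * ?X" "0 < Im (cnj a * d) * ?X"
    unfolding cross mult.assoc using assms(4,5) by (simp_all only: mult_pos_pos)
  then show ?thesis
    unfolding in_sector_def Im_cnj_mult_prod_sign[OF \<open>d \<noteq> 0\<close> assms(2,1,2)]
      Im_cnj_mult_prod_sign[OF assms(1) \<open>d \<noteq> 0\<close> assms(1,2)] by simp
qed

section \<open>Sign changes around a cycle\<close>

lemma card_Collect_bij_betw:
  assumes "bij_betw r A B"
  shows "card {k \<in> B. P k} = card {t \<in> A. P (r t)}"
proof -
  have "{k \<in> B. P k} = r ` {t \<in> A. P (r t)}"
  proof (intro set_eqI iffI)
    fix k assume "k \<in> {k \<in> B. P k}"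
    then obtain t where "t \<in> A" "k = r t" using bij_betw_imp_surj_on[OF assms] by blast
    then show "k \<in> r ` {t \<in> A. P (r t)}" using \<open>k \<in> {k \<in> B. P k}\<close> by blast
  qed (use bij_betwE[OF assms] in auto)
  moreover have "inj_on r {t \<in> A. P (r t)}"
    using bij_betw_imp_inj_on[OF assms] by (rule inj_on_subset) auto
  ultimately show ?thesis by (simp add: card_image)
qed

lemma bij_betw_rotate:
  fixes n0 l :: nat
  assumes "n0 < l"
  shows "bij_betw (\<lambda>t. (n0 + t) mod l) {..<l} {..<l}"
proof (rule bij_betwI[where g = "\<lambda>k. (k + (l - n0)) mod l"])
  fix k :: nat assume "k \<in> {..<l}"
  have "(n0 + (k + (l - n0)) mod l) mod l = (n0 + (k + (l - n0))) mod l" by (simp only: mod_add_right_eq)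
  also have "n0 + (k + (l - n0)) = k + l" using assms by simp
  finally show "(n0 + (k + (l - n0)) mod l) mod l = k" using \<open>k \<in> {..<l}\<close> by simp
  have "((n0 + k) mod l + (l - n0)) mod l = (n0 + k + (l - n0)) mod l" by (simp only: mod_add_left_eq)
  also have "n0 + k + (l - n0) = k + l" using assms by simp
  finally show "((n0 + k) mod l + (l - n0)) mod l = k" using \<open>k \<in> {..<l}\<close> by simp
qed (use assms in auto)

lemma card_sign_changes_rotate:
  fixes p :: "nat \<Rightarrow> bool"
  assumes "n0 < l"
  shows "card {k. k < l \<and> p k \<noteq> p (Suc k mod l)}
    = card {t. t < l \<and> p ((n0 + t) mod l) \<noteq> p ((n0 + Suc t mod l) mod l)}"
proof -
  have "Suc ((n0 + t) mod l) mod l = (n0 + Suc t mod l) mod l" for t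
    by (simp add: mod_Suc_eq mod_add_right_eq)
  then show ?thesis
    using card_Collect_bij_betw[OF bij_betw_rotate[OF assms], of "\<lambda>k. p k \<noteq> p (Suc k mod l)"]
    by simp
qed

lemma card_sign_changes_block:
  fixes q :: "nat \<Rightarrow> bool"
  assumes "0 < f" "f < e" "e \<le> l" and q: "\<And>t. t < l \<Longrightarrow> q t \<longleftrightarrow> f \<le> t \<and> t < e"
  shows "card {t. t < l \<and> q t \<noteq> q (Suc t mod l)} = 2"
proof -
  have "t < l \<and> q t \<noteq> q (Suc t mod l) \<longleftrightarrow> t = f - 1 \<or> t = e - 1" for t
  proof (cases "Suc t < l")
    case True
    then show ?thesis using assms(1-3) by (auto simp: q)
  next
    case False
    show ?thesis
    proof (cases "Suc t = l")
      case True
      then have "t < l" "0 < l" "Suc t mod l = 0" by auto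
      then show ?thesis using True assms(1-3) by (auto simp: q)
    qed (use False assms(1-3) in auto)
  qed
  then have "{t. t < l \<and> q t \<noteq> q (Suc t mod l)} = {f - 1, e - 1}" by blast
  then show ?thesis using assms(1,2) by simp
qed

lemma card_sign_changes_single_run:
  fixes q :: "nat \<Rightarrow> bool"
  assumes "\<not> q 0" "\<exists>t<l. q t"
    and connected: "\<And>B. B \<subseteq> {t. t < l \<and> q t} \<Longrightarrow> B \<noteq> {} \<Longrightarrow>
      (\<And>t. Suc t < l \<Longrightarrow> q t \<Longrightarrow> q (Suc t) \<Longrightarrow> t \<in> B \<longleftrightarrow> Suc t \<in> B) \<Longrightarrow> {t. t < l \<and> q t} \<subseteq> B"
  shows "card {t. t < l \<and> q t \<noteq> q (Suc t mod l)} = 2"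
proof -
  obtain t1 where t1: "t1 < l" "q t1" using assms(2) by blast
  define f where "f = (LEAST t. q t)"
  have f: "q f" "f < l" "\<And>t. t < f \<Longrightarrow> \<not> q t"
    using LeastI[of q t1] Least_le[of q t1] not_less_Least[of _ q] t1 unfolding f_def[symmetric] by auto
  have "0 < f" using f(1) assms(1) by (cases f) auto
  define after_run where "after_run t \<longleftrightarrow> f < t \<and> (t = l \<or> \<not> q t)" for t
  define e where "e = (LEAST t. after_run t)"
  have "after_run l" using f(2) by (simp add: after_run_def)
  then have "after_run e" "e \<le> l" unfolding e_def by (rule LeastI, rule Least_le)
  then have e: "f < e" "e = l \<or> \<not> q e" "e \<le> l" by (simp_all add: after_run_def)
  have before_e: "\<not> after_run t" if "t < e" for t
    using not_less_Least[of t after_run] that unfolding e_def by blast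
  have run: "q t" if "f \<le> t" "t < e" for t
    using before_e[of t] e(3) f(1) that unfolding after_run_def by (cases "t = f") auto
  have "{t. t < l \<and> q t} \<subseteq> {f..<e}"
  proof (rule connected)
    show "{f..<e} \<subseteq> {t. t < l \<and> q t}" "{f..<e} \<noteq> {}" using run e by auto
    fix t assume t: "Suc t < l" "q t" "q (Suc t)"
    have "Suc t \<noteq> e" using t e(2) by auto
    moreover have "Suc t \<noteq> f" using t(2) f(3) by auto
    ultimately show "t \<in> {f..<e} \<longleftrightarrow> Suc t \<in> {f..<e}" by auto
  qed
  then have "q t \<longleftrightarrow> f \<le> t \<and> t < e" if "t < l" for t using that run by auto
  then show ?thesis by (rule card_sign_changes_block[OF \<open>0 < f\<close> e(1,3)])
qed

lemma card_cyclic_sign_changes_single_run: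
  fixes p :: "nat \<Rightarrow> bool"
  assumes "k0 < l" "\<not> p k0" "k1 < l" "p k1"
    and connected: "\<And>A. A \<subseteq> {k. k < l \<and> p k} \<Longrightarrow> A \<noteq> {} \<Longrightarrow>
      (\<And>k. k < l \<Longrightarrow> p k \<Longrightarrow> p (Suc k mod l) \<Longrightarrow> k \<in> A \<longleftrightarrow> Suc k mod l \<in> A) \<Longrightarrow>
      {k. k < l \<and> p k} \<subseteq> A"
  shows "card {k. k < l \<and> p k \<noteq> p (Suc k mod l)} = 2"
proof -
  define r where "r t = (k0 + t) mod l" for t
  define q where "q t = p (r t)" for t
  have bij: "bij_betw r {..<l} {..<l}" unfolding r_def by (rule bij_betw_rotate) fact
  have succ: "Suc (r t) mod l = r (Suc t mod l)" for t
    unfolding r_def by (simp add: mod_Suc_eq mod_add_right_eq)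
  have surj: "\<exists>t<l. r t = k" if "k < l" for k
    using bij_betw_imp_surj_on[OF bij] that by (metis imageE lessThan_iff)
  have q0: "\<not> q 0" using assms(1,2) by (simp add: q_def r_def)
  have "card {t. t < l \<and> q t \<noteq> q (Suc t mod l)} = 2"
  proof (rule card_sign_changes_single_run)
    show "\<not> q 0" by (fact q0)
    show "\<exists>t1<l. q t1" using surj[OF assms(3)] assms(4) by (auto simp: q_def)
  next
    fix B assume B: "B \<subseteq> {t. t < l \<and> q t}" "B \<noteq> {}"
      and closed: "\<And>t. Suc t < l \<Longrightarrow> q t \<Longrightarrow> q (Suc t) \<Longrightarrow> t \<in> B \<longleftrightarrow> Suc t \<in> B"
    have mem: "r t \<in> r ` B \<longleftrightarrow> t \<in> B" if "t < l" for t
      using inj_on_image_mem_iff[OF bij_betw_imp_inj_on[OF bij]] B(1) that by auto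
    have "{k. k < l \<and> p k} \<subseteq> r ` B"
    proof (rule connected)
      show "r ` B \<subseteq> {k. k < l \<and> p k}" "r ` B \<noteq> {}"
        using B bij_betwE[OF bij] by (auto simp: q_def)
      fix k assume k: "k < l" "p k" "p (Suc k mod l)"
      obtain t where t: "t < l" "r t = k" using surj[OF k(1)] by blast
      have "Suc t < l"
      proof (rule ccontr)
        assume "\<not> Suc t < l"
        then have "Suc t = l" using t(1) by linarith
        then have "Suc t mod l = 0" by simp
        then show False using k(3) t(2) succ[of t] q0 by (simp add: q_def)
      qed
      then show "k \<in> r ` B \<longleftrightarrow> Suc k mod l \<in> r ` B"
        using closed[of t] mem[of t] mem[of "Suc t"] k t succ[of t] by (simp add: q_def)
    qed
    then show "{t. t < l \<and> q t} \<subseteq> B"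
      using mem bij_betwE[OF bij] by (auto simp: q_def)
  qed
  then show ?thesis using card_sign_changes_rotate[OF assms(1), of p] by (simp add: q_def r_def)
qed

lemma sum_Suc_mod:
  fixes f :: "nat \<Rightarrow> 'a::comm_monoid_add"
  assumes "0 < l"
  shows "(\<Sum>k<l. f (Suc k mod l)) = (\<Sum>k<l. f k)"
proof -
  obtain m where m: "l = Suc m" using assms by (cases l) auto
  have "(\<Sum>k<Suc m. f (Suc k mod Suc m)) = (\<Sum>k<m. f (Suc k)) + f 0"
    by (simp add: sum.lessThan_Suc)
  also have "\<dots> = (\<Sum>k<Suc m. f k)"
    by (subst sum.lessThan_Suc_shift) (simp add: add.commute)
  finally show ?thesis using m by simp
qed

section \<open>The link of a ray\<close>

lemma orthogonal_triple_eq_0: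
  fixes e1 e2 u x :: "real^3"
  assumes "e1 \<noteq> 0" "e2 \<noteq> 0" "u \<noteq> 0" "e1 \<bullet> e2 = 0" "e1 \<bullet> u = 0" "e2 \<bullet> u = 0"
    and "x \<bullet> e1 = 0" "x \<bullet> e2 = 0" "x \<bullet> u = 0"
  shows "x = 0"
proof (rule ccontr)
  assume x: "x \<noteq> 0"
  have "pairwise orthogonal {e1, e2, u, x}"
    unfolding pairwise_def orthogonal_def using assms by (auto simp: inner_commute)
  then have "independent {e1, e2, u, x}"
    by (rule pairwise_orthogonal_independent) (use assms x in auto)
  then have "card {e1, e2, u, x} \<le> DIM(real^3)" using independent_bound by blast
  moreover have "e1 \<noteq> e2" "e1 \<noteq> u" "e2 \<noteq> u" "x \<noteq> e1" "x \<noteq> e2" "x \<noteq> u"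
    using assms x by auto
  then have "card {e1, e2, u, x} = 4" by auto
  ultimately show False by simp
qed

lemma sum_delta_scaleR:
  fixes w :: "'a \<Rightarrow> 'b::real_vector"
  assumes "finite T" "a \<in> T"
  shows "(\<Sum>i\<in>T. (if i = a then k else 0) *\<^sub>R w i) = k *\<^sub>R w a"
proof -
  have "(\<Sum>i\<in>T. (if i = a then k else 0) *\<^sub>R w i) = (\<Sum>i\<in>T. if i = a then k *\<^sub>R w i else 0)"
    by (rule sum.cong) auto
  then show ?thesis using assms by simp
qed

locale cyclic_link =
  fixes v :: "'n::{finite,linorder} \<Rightarrow> real^3" and F :: "'n set set" and s :: 'n
    and js :: "'n list" and e1 e2 :: "real^3"
  assumes fan: "complete_simplicial_fan v F"
    and distinct_js: "distinct js" and set_js: "set js = nbrs F s"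
    and e1_unit: "e1 \<bullet> e1 = 1" and e2_unit: "e2 \<bullet> e2 = 1" and e1_e2: "e1 \<bullet> e2 = 0"
    and e1_vs: "e1 \<bullet> v s = 0" and e2_vs: "e2 \<bullet> v s = 0"
    and sorted_Arg: "sorted_wrt (>) (map (\<lambda>j. Arg (Complex (v j \<bullet> e1) (v j \<bullet> e2))) js)"
begin

definition proj :: "real^3 \<Rightarrow> complex" where
  "proj x = Complex (x \<bullet> e1) (x \<bullet> e2)"

abbreviation zeta :: "'n \<Rightarrow> complex" where
  "zeta j \<equiv> proj (v j)"

abbreviation l :: nat where
  "l \<equiv> length js"

definition angle :: "nat \<Rightarrow> real" where
  "angle k = Arg (zeta (js ! k))"

definition tri :: "nat \<Rightarrow> nat \<Rightarrow> bool" where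
  "tri a b \<longleftrightarrow> {s, js ! a, js ! b} \<in> F"

lemma proj_add: "proj (x + y) = proj x + proj y"
  by (simp add: proj_def complex_eq_iff inner_add_left)

lemma proj_diff: "proj (x - y) = proj x - proj y"
  by (simp add: proj_def complex_eq_iff inner_diff_left)

lemma proj_scaleR: "proj (a *\<^sub>R x) = of_real a * proj x"
  by (simp add: proj_def complex_eq_iff)

lemma proj_sum: "proj (\<Sum>i\<in>A. c i *\<^sub>R w i) = (\<Sum>i\<in>A. of_real (c i) * proj (w i))"
  by (simp add: proj_def complex_eq_iff Re_sum Im_sum inner_sum_left)

lemma zeta_s: "zeta s = 0"
  using e1_vs e2_vs by (simp add: proj_def inner_commute complex_eq_iff)

lemma proj_eq_0_imp:
  assumes "proj x = 0"
  obtains t where "x = t *\<^sub>R v s"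
proof -
  have vs: "v s \<noteq> 0" by (rule fan_ray_nonzero[OF fan])
  define t where "t = (x \<bullet> v s) / (v s \<bullet> v s)"
  have "x - t *\<^sub>R v s = 0"
  proof (rule orthogonal_triple_eq_0[of e1 e2 "v s"])
    show "e1 \<noteq> 0" "e2 \<noteq> 0" using e1_unit e2_unit by auto
    show "e1 \<bullet> e2 = 0" "e1 \<bullet> v s = 0" "e2 \<bullet> v s = 0" "v s \<noteq> 0" by (fact e1_e2 e1_vs e2_vs vs)+
    show "(x - t *\<^sub>R v s) \<bullet> e1 = 0" "(x - t *\<^sub>R v s) \<bullet> e2 = 0"
      using assms e1_vs e2_vs by (simp_all add: proj_def complex_eq_iff inner_diff_left inner_diff_right inner_commute)
    show "(x - t *\<^sub>R v s) \<bullet> v s = 0" using vs by (simp add: inner_diff_left t_def)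
  qed
  then show ?thesis by (intro that[of t]) simp
qed

lemma nbrs_iff: "c \<in> nbrs F s \<longleftrightarrow> c \<noteq> s \<and> {s, c} \<in> F"
  by (simp add: nbrs_def)

lemma mem_nbrs_if_face: "i \<in> S \<Longrightarrow> S \<in> F \<Longrightarrow> s \<in> S \<Longrightarrow> i \<noteq> s \<Longrightarrow> i \<in> nbrs F s"
  using complete_simplicial_fanD(2)[OF fan, of S "{s, i}"] by (simp add: nbrs_iff)

lemma zeta_nbr_neq_0:
  assumes "j \<in> nbrs F s"
  shows "zeta j \<noteq> 0"
proof
  assume "zeta j = 0"
  then obtain t where t: "v j = t *\<^sub>R v s" by (rule proj_eq_0_imp)
  have j: "j \<noteq> s" "{s, j} \<in> F" using assms by (auto simp: nbrs_iff)
  then have "v j \<noteq> v s" using inj_fan_rays[OF fan] by (auto dest: injD)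
  then have "v j \<in> span ({v s, v j} - {v j})" using t by (simp add: span_base span_mul)
  then have "dependent {v s, v j}" unfolding dependent_def by auto
  moreover have "independent {v s, v j}" using complete_simplicial_fanD(5)[OF fan j(2)] by simp
  ultimately show False by contradiction
qed

text \<open>Since \<open>v s\<close> is not in the closed union of the cones of \<open>\<Sigma>\<close> avoiding \<open>s\<close>, a small push of \<open>v s\<close>
  in any direction of the plane lands in a cone containing \<open>v s\<close>.\<close>

lemma proj_cover:
  assumes "d \<noteq> 0"
  obtains S c where "S \<in> F" "s \<in> S" "\<forall>i\<in>S. 0 \<le> c i" "d = (\<Sum>i\<in>S. of_real (c i) * zeta i)"
proof -
  let ?U = "\<Union>S\<in>{S\<in>F. s \<notin> S}. cone_of v S"
  have "closed ?U" by (rule closed_UN) (auto simp: closed_cone_of)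
  moreover have "v s \<notin> ?U" using fan_ray_mem_coneD[OF fan] by blast
  moreover have "open (- ?U)" using \<open>closed ?U\<close> by (simp only: closed_def)
  ultimately obtain r where r: "r > 0" "ball (v s) r \<subseteq> - ?U"
    using open_contains_ball by blast
  define D where "D = Re d *\<^sub>R e1 + Im d *\<^sub>R e2"
  have "e2 \<bullet> e1 = 0" using e1_e2 by (simp add: inner_commute)
  then have proj_D: "proj D = d"
    using e1_unit e2_unit e1_e2 by (simp add: D_def proj_def inner_add_left complex_eq_iff)
  define t where "t = r / (2 * (norm D + 1))"
  have pos: "0 < 2 * (norm D + 1)" by (smt (verit) norm_ge_zero)
  then have "t > 0" using r(1) by (simp add: t_def)
  have "norm D / (2 * (norm D + 1)) < 1" using pos by (simp add: pos_divide_less_eq)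
  from mult_strict_left_mono[OF this r(1)] have "r * (norm D / (2 * (norm D + 1))) < r" by simp
  moreover have "t * norm D = r * (norm D / (2 * (norm D + 1)))" by (simp add: t_def)
  ultimately have "t * norm D < r" by simp
  define x where "x = v s + t *\<^sub>R D"
  have "dist (v s) x < r" using \<open>t * norm D < r\<close> \<open>t > 0\<close> by (simp add: x_def dist_norm)
  then have "x \<notin> ?U" using r(2) by auto
  moreover obtain S where S: "S \<in> F" "x \<in> cone_of v S" using complete_simplicial_fanD(7)[OF fan] by blast
  ultimately have "s \<in> S" by blast
  obtain c where c: "\<forall>i\<in>S. 0 \<le> c i" "x = (\<Sum>i\<in>S. c i *\<^sub>R v i)" using S(2) unfolding cone_of_def by blast
  have td: "of_real t * d = (\<Sum>i\<in>S. of_real (c i) * zeta i)"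
    using proj_sum[of c v S] by (simp add: x_def proj_add proj_scaleR zeta_s proj_D flip: c(2))
  have "d = of_real (1 / t) * (of_real t * d)" using \<open>t > 0\<close> by simp
  also have "\<dots> = (\<Sum>i\<in>S. of_real (c i / t) * zeta i)" by (simp add: td sum_distrib_left)
  finally have "d = (\<Sum>i\<in>S. of_real (c i / t) * zeta i)" .
  then show ?thesis using S(1) \<open>s \<in> S\<close> c(1) \<open>t > 0\<close> by (intro that[of S "\<lambda>i. c i / t"]) auto
qed

lemma no_nbr_in_closed_triangle:
  assumes "{s, m, m'} \<in> F" "m \<noteq> s" "m' \<noteq> s" "c \<in> nbrs F s" "c \<noteq> m" "c \<noteq> m'" "0 \<le> \<alpha>" "0 \<le> \<beta>"
    and "zeta c = of_real \<alpha> * zeta m + of_real \<beta> * zeta m'"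
  shows False
proof -
  have "proj (v c - \<alpha> *\<^sub>R v m - \<beta> *\<^sub>R v m') = 0" using assms(9) by (simp add: proj_diff proj_scaleR)
  then obtain t where t: "v c - \<alpha> *\<^sub>R v m - \<beta> *\<^sub>R v m' = t *\<^sub>R v s" by (rule proj_eq_0_imp)
  have c: "c \<noteq> s" "{s, c} \<in> F" using assms(4) by (auto simp: nbrs_iff)
  define p where "p = v c + \<bar>t\<bar> *\<^sub>R v s"
  have "p = (\<Sum>i\<in>{s, c}. (if i = s then \<bar>t\<bar> else 1) *\<^sub>R v i)" using c by (simp add: p_def)
  then have "p \<in> cone_of v {s, c}"
    unfolding cone_of_def by (intro CollectI exI[of _ "\<lambda>i. if i = s then \<bar>t\<bar> else 1"]) auto
  moreover have "p \<in> cone_of v {s, m, m'}"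
  proof -
    define w where "w i = (if i = s then t + \<bar>t\<bar> else 0) + (if i = m then \<alpha> else 0) + (if i = m' then \<beta> else 0)" for i
    have "(\<Sum>i\<in>{s, m, m'}. w i *\<^sub>R v i) = (t + \<bar>t\<bar>) *\<^sub>R v s + \<alpha> *\<^sub>R v m + \<beta> *\<^sub>R v m'"
      by (simp add: w_def scaleR_add_left sum.distrib sum_delta_scaleR)
    also have "\<dots> = p" using t by (simp add: p_def algebra_simps)
    finally show ?thesis using assms(7,8) unfolding cone_of_def
      by (intro CollectI exI[of _ w]) (auto simp: w_def)
  qed
  moreover have "{s, c} \<inter> {s, m, m'} = {s}" using c assms(5,6) by auto
  ultimately have "p \<in> cone_of v {s}"
    using complete_simplicial_fanD(6)[OF fan c(2) assms(1)] by (metis IntI)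
  then obtain \<mu> where "p = \<mu> *\<^sub>R v s" unfolding cone_of_def by auto
  then have "v c = (\<mu> - \<bar>t\<bar>) *\<^sub>R v s" by (simp add: p_def algebra_simps)
  moreover have "v c \<noteq> v s" using inj_fan_rays[OF fan] c(1) by (auto dest: injD)
  ultimately have "v c \<in> span ({v s, v c} - {v c})" by (simp add: span_base span_mul)
  then have "dependent (v ` {s, c})" unfolding dependent_def by auto
  then show False using complete_simplicial_fanD(5)[OF fan c(2)] by blast
qed

lemma Im_cnj_zeta_neq_0:
  assumes "{s, m, m'} \<in> F" "m \<noteq> m'" "m \<noteq> s" "m' \<noteq> s"
  shows "Im (cnj (zeta m) * zeta m') \<noteq> 0"
proof
  assume "Im (cnj (zeta m) * zeta m') = 0"
  then have "cnj (zeta m) * zeta m' = of_real (Re (cnj (zeta m) * zeta m'))"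
    by (simp add: complex_eq_iff)
  then have "of_real (Re (cnj (zeta m) * zeta m')) * zeta m - of_real ((cmod (zeta m))\<^sup>2) * zeta m'
      = cnj (zeta m) * zeta m' * zeta m - zeta m * cnj (zeta m) * zeta m'"
    by (simp only: complex_norm_square)
  also have "\<dots> = 0" by (simp add: algebra_simps)
  finally have "of_real (Re (cnj (zeta m) * zeta m')) * zeta m - of_real ((cmod (zeta m))\<^sup>2) * zeta m' = 0" .
  then have "proj (Re (cnj (zeta m) * zeta m') *\<^sub>R v m - (cmod (zeta m))\<^sup>2 *\<^sub>R v m') = 0"
    by (simp add: proj_diff proj_scaleR)
  then obtain t where t: "Re (cnj (zeta m) * zeta m') *\<^sub>R v m - (cmod (zeta m))\<^sup>2 *\<^sub>R v m' = t *\<^sub>R v s"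
    by (rule proj_eq_0_imp)
  have "zeta m \<noteq> 0"
    using zeta_nbr_neq_0 mem_nbrs_if_face[OF _ assms(1)] assms(3) by simp
  have distinct: "v s \<noteq> v m" "v s \<noteq> v m'" "v m \<noteq> v m'"
    using assms inj_fan_rays[OF fan] by (auto dest: injD)
  define u where "u y = (if y = v s then - t else if y = v m then Re (cnj (zeta m) * zeta m')
    else if y = v m' then - (cmod (zeta m))\<^sup>2 else 0)" for y
  have "(\<Sum>y\<in>{v s, v m, v m'}. u y *\<^sub>R y) = 0"
    using distinct t by (simp add: u_def algebra_simps)
  moreover have "u (v m') \<noteq> 0" using distinct \<open>zeta m \<noteq> 0\<close> by (simp add: u_def)
  ultimately have "dependent {v s, v m, v m'}"
    using real_vector.dependent_finite[of "{v s, v m, v m'}"] by blast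
  then show False using complete_simplicial_fanD(5)[OF fan assms(1)] by simp
qed

lemma Arg_zeta_sorted: "sorted_wrt (>) (map (\<lambda>j. Arg (zeta j)) js)"
  using sorted_Arg by (simp add: proj_def)

lemma angle_less: "i < j \<Longrightarrow> j < l \<Longrightarrow> angle j < angle i"
  using sorted_wrt_nth_less[OF Arg_zeta_sorted, of i j] by (simp add: angle_def)

lemma angle_le: "i \<le> j \<Longrightarrow> j < l \<Longrightarrow> angle j \<le> angle i"
  using angle_less by (cases "i = j") (auto intro: less_imp_le)

lemma angle_bounds: "-pi < angle k" "angle k \<le> pi"
  by (simp_all add: angle_def mpi_less_Arg Arg_le_pi)

lemma angle_inj: "i < l \<Longrightarrow> j < l \<Longrightarrow> angle i = angle j \<Longrightarrow> i = j"
  by (metis angle_less less_irrefl linorder_neqE_nat)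

lemma nth_js_mem_nbrs: "k < l \<Longrightarrow> js ! k \<in> nbrs F s"
  using set_js nth_mem by blast

lemma nbr_eq_nth_js:
  assumes "j \<in> nbrs F s"
  obtains k where "k < l" "js ! k = j"
  using assms set_js by (metis in_set_conv_nth)

lemma nth_js_neq_s: "k < l \<Longrightarrow> js ! k \<noteq> s"
  using nth_js_mem_nbrs nbrs_iff by blast

lemma nth_js_eq_iff: "i < l \<Longrightarrow> j < l \<Longrightarrow> js ! i = js ! j \<longleftrightarrow> i = j"
  using distinct_js by (simp add: nth_eq_iff_index_eq)

lemma zeta_nth_js_neq_0: "k < l \<Longrightarrow> zeta (js ! k) \<noteq> 0"
  using zeta_nbr_neq_0 nth_js_mem_nbrs by blast

lemma tri_commute: "tri a b \<longleftrightarrow> tri b a"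
  unfolding tri_def by (simp add: insert_commute)

lemma Im_cnj_zeta_nth_js_neq_0:
  assumes "tri a b" "a < l" "b < l" "a \<noteq> b"
  shows "Im (cnj (zeta (js ! a)) * zeta (js ! b)) \<noteq> 0"
  using Im_cnj_zeta_neq_0[of "js ! a" "js ! b"] assms nth_js_neq_s nth_js_eq_iff unfolding tri_def by blast

lemma sin_angle_diff_neq_0:
  assumes "tri a b" "a < l" "b < l" "a \<noteq> b"
  shows "sin (angle b - angle a) \<noteq> 0"
  using Im_cnj_zeta_nth_js_neq_0[OF assms] Im_cnj_mult_polar[OF zeta_nth_js_neq_0[OF assms(2)]
      zeta_nth_js_neq_0[OF assms(3)]]
  unfolding angle_def by (metis mult_zero_right)

lemma not_in_closed_sector_tri:
  assumes "tri a b" "a < l" "b < l" "c < l" "c \<noteq> a" "c \<noteq> b" "a \<noteq> b"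
  shows "\<not> in_closed_sector (angle a) (angle b) (angle c)"
proof
  assume "in_closed_sector (angle a) (angle b) (angle c)"
  then obtain \<alpha> \<beta> where comb: "0 \<le> \<alpha>" "0 \<le> \<beta>"
    "zeta (js ! c) = of_real \<alpha> * zeta (js ! a) + of_real \<beta> * zeta (js ! b)"
    using nonneg_comb_if_in_closed_sector[OF zeta_nth_js_neq_0[OF assms(2)] zeta_nth_js_neq_0[OF assms(3)]
        zeta_nth_js_neq_0[OF assms(4)] Im_cnj_zeta_nth_js_neq_0[OF assms(1-3,7)]]
    unfolding angle_def by blast
  show False
    by (rule no_nbr_in_closed_triangle[OF _ _ _ _ _ _ comb])
      (use assms in \<open>simp_all add: tri_def nth_js_neq_s nth_js_mem_nbrs nth_js_eq_iff\<close>)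
qed

lemma pos_comb_if_not_nbr_direction:
  assumes "d \<noteq> 0" "\<And>j. j \<in> nbrs F s \<Longrightarrow> Arg d \<noteq> Arg (zeta j)"
  obtains m m' \<alpha> \<beta> where "{s, m, m'} \<in> F" "m \<noteq> m'" "m \<in> nbrs F s" "m' \<in> nbrs F s"
    "0 < \<alpha>" "0 < \<beta>" "d = of_real \<alpha> * zeta m + of_real \<beta> * zeta m'"
proof -
  obtain S c where S: "S \<in> F" "s \<in> S" "\<forall>i\<in>S. 0 \<le> c i" "d = (\<Sum>i\<in>S. of_real (c i) * zeta i)"
    using proj_cover[OF assms(1)] by blast
  have d: "d = (\<Sum>i\<in>S - {s}. of_real (c i) * zeta i)"
    using S(2,4) sum.remove[of S s "\<lambda>i. of_real (c i) * zeta i"] zeta_s by simp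
  have nbrs: "S - {s} \<subseteq> nbrs F s" using mem_nbrs_if_face S(1,2) by blast
  have ray: False if "i \<in> S - {s}" "d = of_real (c i) * zeta i" for i
  proof -
    have "c i > 0" using that(2) S(3) that(1) assms(1) by force
    then show False using that assms(2) nbrs by auto
  qed
  have "card (S - {s}) \<le> 2"
    using fan_face_card_le[OF fan S(1)] S(2) by (simp add: card_Diff_singleton)
  then have "card (S - {s}) = 0 \<or> card (S - {s}) = 1 \<or> card (S - {s}) = 2" by linarith
  then consider "S - {s} = {}" | m where "S - {s} = {m}" | m m' where "m \<noteq> m'" "S - {s} = {m, m'}"
    by (auto simp: card_1_singleton_iff card_2_iff)
  then show ?thesis
  proof cases
    case 1 then show ?thesis using d assms(1) by (simp add: 1)
  next
    case (2 m) then show ?thesis using ray[of m] d by simp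
  next
    case (3 m m')
    have d2: "d = of_real (c m) * zeta m + of_real (c m') * zeta m'" using d 3 by simp
    have mm: "m \<in> S - {s}" "m' \<in> S - {s}" using 3(2) by auto
    have "c m \<noteq> 0" using ray[OF mm(2)] d2 by auto
    moreover have "c m' \<noteq> 0" using ray[OF mm(1)] d2 by auto
    ultimately have pos: "0 < c m" "0 < c m'" using S(3) mm by (auto simp: less_le)
    have "S = {s, m, m'}" using S(2) 3(2) by blast
    then have "{s, m, m'} \<in> F" using S(1) by simp
    moreover have "m \<in> nbrs F s" "m' \<in> nbrs F s" using nbrs mm by auto
    ultimately show ?thesis using that[OF _ 3(1) _ _ pos d2] by blast
  qed
qed

lemma in_sector_tri_if_not_angle:
  assumes "-pi < \<phi>" "\<phi> \<le> pi" "\<And>c. c < l \<Longrightarrow> \<phi> \<noteq> angle c"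
  obtains a b where "a < l" "b < l" "a \<noteq> b" "tri a b" "in_sector (angle a) (angle b) \<phi>"
proof -
  have Arg: "Arg (cis \<phi>) = \<phi>" using assms(1,2) by (simp add: Arg_cis)
  have not_nbr: "Arg (cis \<phi>) \<noteq> Arg (zeta j)" if "j \<in> nbrs F s" for j
    using that assms(3) Arg by (metis angle_def nbr_eq_nth_js)
  obtain m m' \<alpha> \<beta> where mm: "{s, m, m'} \<in> F" "m \<noteq> m'" "m \<in> nbrs F s" "m' \<in> nbrs F s"
    "0 < \<alpha>" "0 < \<beta>" "cis \<phi> = of_real \<alpha> * zeta m + of_real \<beta> * zeta m'"
    by (rule pos_comb_if_not_nbr_direction[OF cis_neq_zero not_nbr])
  obtain a where a: "a < l" "js ! a = m" using nbr_eq_nth_js[OF mm(3)] .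
  obtain b where b: "b < l" "js ! b = m'" using nbr_eq_nth_js[OF mm(4)] .
  note ab = a b
  have "tri a b" "a \<noteq> b" using mm(1,2) ab by (auto simp: tri_def)
  moreover have "in_sector (angle a) (angle b) \<phi>"
    using in_sector_if_pos_comb[OF zeta_nth_js_neq_0[OF ab(1)] zeta_nth_js_neq_0[OF ab(3)]
        Im_cnj_zeta_nth_js_neq_0[OF \<open>tri a b\<close> ab(1,3) \<open>a \<noteq> b\<close>] mm(5,6)] mm(7) ab Arg
    by (simp add: angle_def)
  ultimately show ?thesis using ab(1,3) by (intro that)
qed

lemma tri_adjacent:
  assumes "tri a b" "a < b" "b < l"
  shows "b = Suc a \<or> (a = 0 \<and> b = l - 1)"
proof (rule ccontr)
  assume far: "\<not> (b = Suc a \<or> (a = 0 \<and> b = l - 1))"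
  have "angle b < angle a" using angle_less assms(2,3) .
  have "angle a - angle b \<noteq> pi"
  proof
    assume "angle a - angle b = pi"
    then have "angle b - angle a = - pi" by simp
    then have "sin (angle b - angle a) = 0" by simp
    then show False using sin_angle_diff_neq_0[OF assms(1)] assms(2,3) by simp
  qed
  then consider "angle a - angle b < pi" | "angle a - angle b > pi" by linarith
  then show False
  proof cases
    case 1
    have "Suc a < b" using far assms(2) by auto
    then have "in_closed_sector (angle a) (angle b) (angle (Suc a))"
      using angle_less[of a "Suc a"] angle_less[of "Suc a" b] angle_bounds[of a] angle_bounds[of b] 1 assms(3)
      by (intro in_closed_sector_short_arc) auto
    then show False using not_in_closed_sector_tri[OF assms(1), of "Suc a"] \<open>Suc a < b\<close> assms(3) by auto
  next
    case 2
    obtain c where c: "c < l" "c < a \<or> b < c"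
    proof (cases "a = 0")
      case True
      then have "b < l - 1" using far assms(3) by auto
      show ?thesis by (rule that[of "l - 1"]) (use \<open>b < l - 1\<close> in auto)
    next
      case False
      show ?thesis by (rule that[of 0]) (use False assms(3) in auto)
    qed
    have "angle a < angle c \<or> angle c < angle b" using c angle_less assms(2,3) by auto
    then have "in_closed_sector (angle a) (angle b) (angle c)"
      using 2 \<open>angle b < angle a\<close> angle_bounds[of a] angle_bounds[of b] angle_bounds[of c]
      by (intro in_closed_sector_long_arc) auto
    then show False using not_in_closed_sector_tri[OF assms(1), of c] c assms(2,3) by auto
  qed
qed

lemma eq_tri_vertex_if_in_sector:
  assumes "tri p q" "p < l" "q < l" "p \<noteq> q" "x < l"
    and "angle x = angle p \<or> angle x = angle q \<or> in_sector (angle p) (angle q) (angle x)"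
  shows "x = p \<or> x = q"
proof (rule ccontr)
  assume x: "\<not> (x = p \<or> x = q)"
  then have "\<not> in_closed_sector (angle p) (angle q) (angle x)"
    using not_in_closed_sector_tri assms(1-5) by auto
  moreover have "angle x \<noteq> angle p" "angle x \<noteq> angle q" using angle_inj assms(2,3,5) x by metis+
  ultimately show False using assms(6) in_sector_imp_in_closed_sector by blast
qed

lemma tri_Suc:
  assumes "Suc a < l"
  shows "tri a (Suc a)"
proof -
  define \<phi> where "\<phi> = (angle a + angle (Suc a)) / 2"
  have "angle (Suc a) < angle a" using angle_less assms by auto
  then have \<phi>: "angle (Suc a) < \<phi>" "\<phi> < angle a" by (auto simp: \<phi>_def)
  have outside: "angle c \<le> angle (Suc a) \<or> angle a \<le> angle c" if "c < l" for c
    using angle_le[of c a] angle_le[of "Suc a" c] assms that by (cases "c \<le> a") auto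
  obtain p q where pq: "p < l" "q < l" "p \<noteq> q" "tri p q" "in_sector (angle p) (angle q) \<phi>"
  proof (rule in_sector_tri_if_not_angle)
    show "-pi < \<phi>" "\<phi> \<le> pi" using angle_bounds[of a] angle_bounds[of "Suc a"] by (auto simp: \<phi>_def)
    show "\<phi> \<noteq> angle c" if "c < l" for c using outside[OF that] \<phi> by auto
  qed
  have "(angle a = angle p \<or> angle a = angle q \<or> in_sector (angle p) (angle q) (angle a)) \<and>
      (angle (Suc a) = angle p \<or> angle (Suc a) = angle q \<or> in_sector (angle p) (angle q) (angle (Suc a)))"
    by (rule in_sector_gap_bounds)
      (use angle_bounds \<phi> outside[OF pq(1)] outside[OF pq(2)] pq(5) in \<open>simp_all\<close>)
  then have "a = p \<or> a = q" "Suc a = p \<or> Suc a = q"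
    using eq_tri_vertex_if_in_sector[OF pq(4,1,2,3)] assms by auto
  then show ?thesis using pq(3,4) tri_commute by auto
qed

lemma tri_last_first:
  assumes "2 \<le> l"
  shows "tri 0 (l - 1)"
proof -
  define \<phi> where "\<phi> = (angle (l - 1) - pi) / 2"
  have \<phi>: "-pi < \<phi>" "\<phi> < angle (l - 1)" using angle_bounds[of "l - 1"] by (auto simp: \<phi>_def)
  have between: "angle (l - 1) \<le> angle c \<and> angle c \<le> angle 0" if "c < l" for c
    using angle_le that by auto
  obtain p q where pq: "p < l" "q < l" "p \<noteq> q" "tri p q" "in_sector (angle p) (angle q) \<phi>"
  proof (rule in_sector_tri_if_not_angle)
    show "-pi < \<phi>" "\<phi> \<le> pi" using \<phi> angle_bounds[of "l - 1"] by auto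
    show "\<phi> \<noteq> angle c" if "c < l" for c using between[OF that] \<phi> by auto
  qed
  have gap: "(angle 0 = angle p \<or> angle 0 = angle q \<or> in_sector (angle p) (angle q) (angle 0)) \<and>
      (angle (l - 1) = angle p \<or> angle (l - 1) = angle q \<or> in_sector (angle p) (angle q) (angle (l - 1)))"
    by (rule in_sector_wrap_gap_bounds)
      (use angle_bounds \<phi> between[OF pq(1)] between[OF pq(2)] pq(5) in \<open>simp_all\<close>)
  have "0 < l" "l - 1 < l" using assms by auto
  then have "0 = p \<or> 0 = q" "l - 1 = p \<or> l - 1 = q"
    using gap by (intro eq_tri_vertex_if_in_sector[OF pq(4,1,2,3)]; blast)+
  then show ?thesis using pq(1-4) tri_commute by auto
qed

text \<open>Two neighbours cannot surround \<open>v s\<close>: their two triangles would have to cover both arcs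
  between them, each of which would lie in one and the same sector of opening less than \<open>pi\<close>.\<close>

lemma three_le_length: "3 \<le> l"
proof (rule ccontr)
  assume "\<not> 3 \<le> l"
  then have "l \<le> 2" by simp
  have "0 < l"
  proof (rule ccontr)
    assume "\<not> 0 < l"
    obtain p q where "p < l" by (rule in_sector_tri_if_not_angle[of 0]) (use \<open>\<not> 0 < l\<close> in auto)
    then show False using \<open>\<not> 0 < l\<close> by simp
  qed
  define \<phi>2 where "\<phi>2 = (angle (l - 1) - pi) / 2"
  have \<phi>2: "-pi < \<phi>2" "\<phi>2 < angle (l - 1)" using angle_bounds[of "l - 1"] by (auto simp: \<phi>2_def)
  obtain p q where pq: "p < l" "q < l" "p \<noteq> q" "in_sector (angle p) (angle q) \<phi>2"
  proof (rule in_sector_tri_if_not_angle)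
    show "-pi < \<phi>2" "\<phi>2 \<le> pi" using \<phi>2 angle_bounds[of "l - 1"] by auto
    show "\<phi>2 \<noteq> angle c" if "c < l" for c
    proof -
      have "c \<le> l - 1" "l - 1 < l" using that by auto
      then show ?thesis using angle_le[of c "l - 1"] \<phi>2 by auto
    qed
  qed
  then have "l = 2" "p = 0 \<and> q = 1 \<or> p = 1 \<and> q = 0" using \<open>l \<le> 2\<close> by auto
  define \<phi>1 where "\<phi>1 = (angle 0 + angle 1) / 2"
  have "angle 1 < angle 0" using angle_less \<open>l = 2\<close> by auto
  then have \<phi>1: "angle 1 < \<phi>1" "\<phi>1 < angle 0" by (auto simp: \<phi>1_def)
  obtain p' q' where pq': "p' < l" "q' < l" "p' \<noteq> q'" "in_sector (angle p') (angle q') \<phi>1"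
  proof (rule in_sector_tri_if_not_angle)
    show "-pi < \<phi>1" "\<phi>1 \<le> pi" using angle_bounds[of 0] angle_bounds[of 1] by (auto simp: \<phi>1_def)
    show "\<phi>1 \<noteq> angle c" if "c < l" for c using \<phi>1 that \<open>l = 2\<close> by (auto simp: less_2_cases_iff)
  qed
  have "p' = 0 \<and> q' = 1 \<or> p' = 1 \<and> q' = 0" using pq' \<open>l = 2\<close> by auto
  then have "in_sector (angle 0) (angle 1) \<phi>1" using pq'(4) in_sector_commute by auto
  moreover have "in_sector (angle 0) (angle 1) \<phi>2"
    using pq(4) \<open>p = 0 \<and> q = 1 \<or> p = 1 \<and> q = 0\<close> in_sector_commute by auto
  ultimately show False
    using not_in_sector_both_gaps[of "angle 0" "angle 1" \<phi>1 \<phi>2] angle_bounds \<phi>1 \<phi>2 \<open>l = 2\<close> by auto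
qed

lemma Suc_mod_length: "k < l \<Longrightarrow> Suc k mod l = (if Suc k = l then 0 else Suc k)"
  by (simp add: mod_Suc)

lemma nth_js_Suc_mod_neq:
  assumes "k < l"
  shows "js ! k \<noteq> js ! (Suc k mod l)"
proof
  assume "js ! k = js ! (Suc k mod l)"
  moreover have "Suc k mod l < l" using assms by (intro mod_less_divisor) linarith
  ultimately have "k = Suc k mod l" using nth_js_eq_iff assms by blast
  then show False using three_le_length assms by (simp add: Suc_mod_length split: if_splits)
qed

lemma tri_Suc_mod:
  assumes "k < l"
  shows "tri k (Suc k mod l)"
proof (cases "Suc k = l")
  case True
  then have "k = l - 1" by simp
  then show ?thesis using tri_last_first three_le_length tri_commute True by simp
qed (use assms tri_Suc in \<open>simp add: Suc_mod_length\<close>)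

section \<open>Cycles through the link\<close>

lemma js_nonempty: "js \<noteq> []"
  using three_le_length by auto

lemma nth_js_mem_if_set_subset:
  assumes "set js \<subseteq> P" "k < l"
  shows "js ! k \<in> P" "js ! (Suc k mod l) \<in> P"
  using assms nth_mem[of k js] nth_mem[of "Suc k mod l" js] js_nonempty by auto

definition link_cycle :: "'n set \<Rightarrow> complex" where
  "link_cycle \<sigma> = (\<Sum>k<l. edge_chain (js ! k) (js ! (Suc k mod l)) \<sigma>)"

lemma bdry_link_cycle: "bdry 2 link_cycle = (\<lambda>_. 0)"
proof -
  have "bdry 2 link_cycle = (\<lambda>\<tau>. \<Sum>k<l. unit_chain {js ! (Suc k mod l)} \<tau> - unit_chain {js ! k} \<tau>)"
    unfolding link_cycle_def bdry_sum by (intro ext sum.cong) (auto simp: bdry_edge_chain nth_js_Suc_mod_neq)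
  also have "\<dots> = (\<lambda>_. 0)"
  proof
    fix \<tau>
    have "0 < l" using js_nonempty by simp
    then show "(\<Sum>k<l. unit_chain {js ! (Suc k mod l)} \<tau> - unit_chain {js ! k} \<tau>) = 0"
      using sum_Suc_mod[of l "\<lambda>k. unit_chain {js ! k} \<tau>"] by (simp add: sum_subtractf)
  qed
  finally show ?thesis .
qed

lemma link_cycle_nonzeroD: "link_cycle \<sigma> \<noteq> 0 \<Longrightarrow> \<exists>k<l. \<sigma> = {js ! k, js ! (Suc k mod l)}"
  unfolding link_cycle_def by (metis (no_types, lifting) edge_chain_def lessThan_iff sum.neutral)

lemma link_cycle_first_edge: "link_cycle {js ! 0, js ! 1} \<noteq> 0"
proof -
  have "edge_chain (js ! k) (js ! (Suc k mod l)) {js ! 0, js ! 1} = 0" if "0 < k" "k < l" for k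
  proof -
    have "{js ! 0, js ! 1} \<noteq> {js ! k, js ! (Suc k mod l)}"
      using that three_le_length js_nonempty nth_js_eq_iff[of _ k] nth_js_eq_iff[of _ "Suc k mod l"]
      by (auto simp: doubleton_eq_iff Suc_mod_length split: if_splits)
    then show ?thesis by (simp add: edge_chain_def)
  qed
  then have "link_cycle {js ! 0, js ! 1} = edge_chain (js ! 0) (js ! 1) {js ! 0, js ! 1}"
    unfolding link_cycle_def using three_le_length
    by (subst sum.remove[of _ 0]) (auto intro!: sum.neutral simp: Suc_mod_length)
  then show ?thesis by (simp add: edge_chain_def)
qed

lemma is_chain_link_cycle:
  assumes "set js \<subseteq> P"
  shows "is_chain (Pow P \<inter> F) 2 link_cycle"
  unfolding is_chain_def
proof (intro allI impI)
  fix \<sigma> assume "link_cycle \<sigma> \<noteq> 0"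
  then obtain k where k: "k < l" "\<sigma> = {js ! k, js ! (Suc k mod l)}" using link_cycle_nonzeroD by blast
  have "\<sigma> \<subseteq> {s, js ! k, js ! (Suc k mod l)}" using k by auto
  then have "\<sigma> \<in> F" using complete_simplicial_fanD(2)[OF fan tri_Suc_mod[OF k(1), unfolded tri_def]] by blast
  moreover have "\<sigma> \<subseteq> P" using k nth_js_mem_if_set_subset[OF assms k(1)] by auto
  moreover have "card \<sigma> = 2" using k nth_js_Suc_mod_neq by auto
  ultimately show "\<sigma> \<in> Pow P \<inter> F \<and> card \<sigma> = 2" by auto
qed

lemma is_chain_cone_link_cycle:
  assumes "set js \<subseteq> P"
  shows "is_chain (Pow (insert s P) \<inter> F) 3 (cone_chain s link_cycle)"
  unfolding is_chain_def
proof (intro allI impI)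
  fix \<sigma> assume "cone_chain s link_cycle \<sigma> \<noteq> 0"
  then have "s \<in> \<sigma>" "link_cycle (\<sigma> - {s}) \<noteq> 0" by (auto simp: cone_chain_def split: if_splits)
  then obtain k where k: "k < l" "\<sigma> = {s, js ! k, js ! (Suc k mod l)}" using link_cycle_nonzeroD by blast
  then have "\<sigma> \<in> F" using tri_Suc_mod[OF k(1)] by (simp add: tri_def)
  moreover have "\<sigma> \<subseteq> insert s P" using k nth_js_mem_if_set_subset[OF assms k(1)] by auto
  moreover have "card \<sigma> = 3"
    using k nth_js_Suc_mod_neq[OF k(1)] nth_js_neq_s[OF k(1)]
      nth_js_neq_s[of "Suc k mod l"] js_nonempty by auto
  ultimately show "\<sigma> \<in> Pow (insert s P) \<inter> F \<and> card \<sigma> = 3" by auto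
qed

text \<open>If all neighbours of \<open>s\<close> lie in \<open>P\<close>, the link of \<open>s\<close> is a 1-cycle in \<open>C\<^sub>P\<close>; if it bounds a
  2-chain \<open>b\<close> there, then \<open>b\<close> minus the cone over the link is a 2-cycle in \<open>C\<^bsub>P \<union> {s}\<^esub>\<close>, which
  bounds nothing because \<open>\<Sigma>\<close> has no 4-element faces.\<close>

lemma red_hom_nonzero_if_link_inside:
  assumes "set js \<subseteq> P" "s \<notin> P" "\<not> red_hom_nonzero (Pow P \<inter> F) 2"
  shows "red_hom_nonzero (Pow (insert s P) \<inter> F) 3"
proof -
  obtain b where b: "is_chain (Pow P \<inter> F) 3 b" "bdry 3 b = link_cycle"
    using boundary_if_not_red_hom_nonzero[OF assms(3) is_chain_link_cycle[OF assms(1)] bdry_link_cycle]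
    by (auto simp: numeral_3_eq_3 numeral_2_eq_2)
  define c where "c \<sigma> = b \<sigma> - cone_chain s link_cycle \<sigma>" for \<sigma>
  have "bdry (Suc 2) c = (\<lambda>_. 0)"
    unfolding c_def
  proof (rule cycle_diff_cone_chain)
    show "link_cycle \<sigma> \<noteq> 0 \<Longrightarrow> s \<notin> \<sigma> \<and> card \<sigma> = 2" for \<sigma>
      using is_chain_link_cycle[OF assms(1)] assms(2) by (auto simp: is_chain_def)
    show "bdry (Suc 2) b = link_cycle" using b(2) by simp
  qed (rule bdry_link_cycle)
  then have cycle: "bdry 3 c = (\<lambda>_. 0)" by simp
  have chain: "is_chain (Pow (insert s P) \<inter> F) 3 c"
    unfolding c_def
    by (rule is_chain_diff[OF is_chain_mono[OF b(1)] is_chain_cone_link_cycle[OF assms(1)]]) auto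
  have "c {s, js ! 0, js ! 1} \<noteq> 0"
  proof -
    have "b {s, js ! 0, js ! 1} = 0" using b(1) assms(2) by (auto simp: is_chain_def)
    moreover have "{s, js ! 0, js ! 1} - {s} = {js ! 0, js ! 1}"
      using nth_js_neq_s[of 0] nth_js_neq_s[of 1] three_le_length js_nonempty by auto
    ultimately show ?thesis using link_cycle_first_edge by (simp add: c_def cone_chain_def)
  qed
  then show ?thesis
  proof (intro red_hom_nonzeroI[OF chain cycle, where w = "unit_chain {s, js ! 0, js ! 1}"])
    show "cobdry (unit_chain {s, js ! 0, js ! 1}) \<tau> = 0" if "\<tau> \<in> Pow (insert s P) \<inter> F" "card \<tau> = Suc 3" for \<tau>
      using fan_face_card_le[OF fan, of \<tau>] that by simp
  qed (simp add: sum_unit_chain_mult)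
qed

text \<open>The 1-cochain dual to the edges from \<open>s\<close> to the neighbours indexed by \<open>A\<close>, signed so that
  it takes the value 1 on each of these edges oriented away from \<open>s\<close>.\<close>

definition arc_cochain :: "nat set \<Rightarrow> 'n set \<Rightarrow> complex" where
  "arc_cochain A \<sigma> =
    (if s \<in> \<sigma> \<and> (\<exists>k\<in>A. \<sigma> - {s} = {js ! k}) then (-1) ^ card {u \<in> \<sigma>. u < s} else 0)"

lemma arc_cochain_edge:
  assumes "A \<subseteq> {..<l}" "k < l"
  shows "arc_cochain A {s, js ! k} = (if k \<in> A then (-1) ^ card {u \<in> {s, js ! k}. u < s} else 0)"
proof -
  have "{s, js ! k} - {s} = {js ! k}" using nth_js_neq_s[OF assms(2)] by auto
  moreover have "(\<exists>k'\<in>A. js ! k = js ! k') \<longleftrightarrow> k \<in> A" using assms nth_js_eq_iff by auto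
  ultimately show ?thesis by (simp add: arc_cochain_def)
qed

lemma mem_closed_iff_tri:
  assumes closed: "\<And>k. k < l \<Longrightarrow> js ! k \<in> P \<Longrightarrow> js ! (Suc k mod l) \<in> P \<Longrightarrow> k \<in> A \<longleftrightarrow> Suc k mod l \<in> A"
    and "tri a b" "a < l" "b < l" "a \<noteq> b" "js ! a \<in> P" "js ! b \<in> P"
  shows "a \<in> A \<longleftrightarrow> b \<in> A"
proof -
  have ordered: "x \<in> A \<longleftrightarrow> y \<in> A"
    if xy: "tri x y" "x < y" "y < l" "js ! x \<in> P" "js ! y \<in> P" for x y
  proof -
    consider "y = Suc x" | "x = 0" "y = l - 1" using tri_adjacent[OF xy(1-3)] by blast
    then show ?thesis
    proof cases
      case 1
      then show ?thesis using closed[of x] xy by simp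
    next
      case 2
      then have "Suc y = l" using xy(3) by linarith
      then have "Suc y mod l = x" using \<open>x = 0\<close> by simp
      then show ?thesis using closed[of y] xy by simp
    qed
  qed
  show ?thesis
  proof (cases "a < b")
    case False
    then have "b < a" using assms(5) by simp
    then show ?thesis using ordered[of b a] assms(2,3,6,7) tri_commute by blast
  qed (use ordered[of a b] assms(2,4,6,7) in blast)
qed

lemma cobdry_arc_cochain:
  assumes closed: "\<And>k. k < l \<Longrightarrow> js ! k \<in> P \<Longrightarrow> js ! (Suc k mod l) \<in> P \<Longrightarrow> k \<in> A \<longleftrightarrow> Suc k mod l \<in> A"
    and "A \<subseteq> {..<l}" "s \<notin> P" "\<tau> \<in> Pow (insert s P) \<inter> F" "card \<tau> = 3"
  shows "cobdry (arc_cochain A) \<tau> = 0"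
proof (cases "s \<in> \<tau>")
  case False
  then show ?thesis unfolding cobdry_def by (intro sum.neutral) (auto simp: arc_cochain_def)
next
  case True
  then have "card (\<tau> - {s}) = 2" using assms(5) by simp
  then obtain p q where pq: "p \<noteq> q" "\<tau> - {s} = {p, q}" by (auto simp: card_2_iff)
  then have \<tau>: "\<tau> = {s, p, q}" "p \<noteq> s" "q \<noteq> s" using True by auto
  moreover have "\<tau> \<in> F" using assms(4) by simp
  ultimately have "p \<in> nbrs F s" "q \<in> nbrs F s" using mem_nbrs_if_face[of _ \<tau>] True by auto
  then obtain a b where ab: "a < l" "js ! a = p" "b < l" "js ! b = q" by (metis nbr_eq_nth_js)
  have "a \<in> A \<longleftrightarrow> b \<in> A"
    using mem_closed_iff_tri[OF closed] assms(3,4) \<tau> pq(1) ab by (auto simp: tri_def)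
  moreover have "arc_cochain A {s, p} = (if a \<in> A then (-1) ^ card {u \<in> {s, p}. u < s} else 0)"
    "arc_cochain A {s, q} = (if b \<in> A then (-1) ^ card {u \<in> {s, q}. u < s} else 0)"
    using arc_cochain_edge[OF assms(2)] ab by auto
  moreover have "arc_cochain A {p, q} = 0" using \<tau>(2,3) by (simp add: arc_cochain_def)
  moreover have "cobdry (arc_cochain A) \<tau> = (-1) ^ card {u \<in> {p, q}. u < s} * arc_cochain A {p, q}
      + ((-1) ^ card {u \<in> {s, q}. u < p} * arc_cochain A {s, q}
      + (-1) ^ card {u \<in> {s, p}. u < q} * arc_cochain A {s, p})"
  proof -
    define f where "f x = (-1::complex) ^ card {u \<in> {s, p, q} - {x}. u < x} * arc_cochain A ({s, p, q} - {x})"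
      for x
    have "{s, p, q} - {s} = {p, q}" "{s, p, q} - {p} = {s, q}" "{s, p, q} - {q} = {s, p}"
      using \<tau> pq(1) by auto
    moreover have "cobdry (arc_cochain A) \<tau> = f s + (f p + f q)"
      unfolding cobdry_def \<tau>(1) f_def[symmetric] using \<tau>(2,3) pq(1) by simp
    ultimately show ?thesis by (simp only: f_def)
  qed
  ultimately show ?thesis
    using edge_signs_cancel[of s p q] \<tau>(2,3) pq(1) by (simp add: mult.assoc)
qed

lemma arc_cochain_mult_cone:
  assumes "A \<subseteq> {..<l}" "a1 \<in> A" "a2 < l" "a2 \<notin> A"
  shows "arc_cochain A \<sigma> * cone_chain s (\<lambda>\<sigma>. unit_chain {js ! a2} \<sigma> - unit_chain {js ! a1} \<sigma>) \<sigma>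
    = - unit_chain {s, js ! a1} \<sigma>"
proof -
  have a1: "a1 < l" using assms(1,2) by auto
  have "cone_chain s (\<lambda>\<sigma>. unit_chain {js ! a2} \<sigma> - unit_chain {js ! a1} \<sigma>) \<sigma>
      = cone_chain s (unit_chain {js ! a2}) \<sigma> - cone_chain s (unit_chain {js ! a1}) \<sigma>"
    by (simp add: cone_chain_def algebra_simps)
  moreover have "{s, js ! a1} \<noteq> {s, js ! a2}"
    using assms nth_js_neq_s[OF a1] nth_js_eq_iff[OF a1 assms(3)] by (auto simp: doubleton_eq_iff)
  moreover have "(-1::complex) ^ n * (-1) ^ n = 1" for n
    by (simp flip: power_add)
  ultimately show ?thesis
    using assms arc_cochain_edge[OF assms(1) a1] arc_cochain_edge[OF assms(1,3)]
      nth_js_neq_s[OF a1] nth_js_neq_s[OF assms(3)]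
    by (auto simp: cone_chain_unit_chain unit_chain_def)
qed

lemma is_chain_cone_vertex_diff:
  assumes "a1 < l" "a2 < l" "js ! a1 \<in> P" "js ! a2 \<in> P"
  shows "is_chain (Pow (insert s P) \<inter> F) 2
    (cone_chain s (\<lambda>\<sigma>. unit_chain {js ! a2} \<sigma> - unit_chain {js ! a1} \<sigma>))"
  unfolding is_chain_def
proof (intro allI impI)
  fix \<sigma> assume "cone_chain s (\<lambda>\<sigma>. unit_chain {js ! a2} \<sigma> - unit_chain {js ! a1} \<sigma>) \<sigma> \<noteq> 0"
  then have "s \<in> \<sigma>" "\<sigma> - {s} = {js ! a1} \<or> \<sigma> - {s} = {js ! a2}"
    by (auto simp: cone_chain_def unit_chain_def split: if_splits)
  then have "\<sigma> = {s, js ! a1} \<or> \<sigma> = {s, js ! a2}" by blast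
  moreover have "{s, js ! a1} \<in> F" "{s, js ! a2} \<in> F" "js ! a1 \<noteq> s" "js ! a2 \<noteq> s"
    using nth_js_mem_nbrs[OF assms(1)] nth_js_mem_nbrs[OF assms(2)] by (auto simp: nbrs_iff)
  ultimately show "\<sigma> \<in> Pow (insert s P) \<inter> F \<and> card \<sigma> = 2" using assms(3,4) by auto
qed

lemma red_hom_nonzero_if_split_runs:
  assumes "s \<notin> P" "A \<subseteq> {k. k < l \<and> js ! k \<in> P}"
    and closed: "\<And>k. k < l \<Longrightarrow> js ! k \<in> P \<Longrightarrow> js ! (Suc k mod l) \<in> P \<Longrightarrow> k \<in> A \<longleftrightarrow> Suc k mod l \<in> A"
    and "a1 \<in> A" "a2 < l" "js ! a2 \<in> P" "a2 \<notin> A"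
    and "\<not> red_hom_nonzero (Pow P \<inter> F) 1"
  shows "red_hom_nonzero (Pow (insert s P) \<inter> F) 2"
proof -
  define c0 where "c0 = (\<lambda>\<sigma>. unit_chain {js ! a2} \<sigma> - unit_chain {js ! a1} \<sigma>)"
  have a1: "a1 < l" "js ! a1 \<in> P" using assms(2,4) by auto
  have supp0: "c0 \<sigma> \<noteq> 0 \<Longrightarrow> \<sigma> = {js ! a1} \<or> \<sigma> = {js ! a2}" for \<sigma>
    by (auto simp: c0_def unit_chain_def split: if_splits)
  have "is_chain (Pow P \<inter> F) 1 c0"
    using supp0 a1 assms(6) complete_simplicial_fanD(3)[OF fan] unfolding is_chain_def by fastforce
  moreover have cycle0: "bdry 1 c0 = (\<lambda>_. 0)" unfolding c0_def One_nat_def by (rule bdry_unit_chain_diff)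
  ultimately obtain b where b: "is_chain (Pow P \<inter> F) (Suc 1) b" "bdry (Suc 1) b = c0"
    using boundary_if_not_red_hom_nonzero[OF assms(8)] by blast
  define c where "c = (\<lambda>\<sigma>. b \<sigma> - cone_chain s c0 \<sigma>)"
  have "bdry (Suc 1) c = (\<lambda>_. 0)"
    unfolding c_def
  proof (rule cycle_diff_cone_chain)
    show "c0 \<sigma> \<noteq> 0 \<Longrightarrow> s \<notin> \<sigma> \<and> card \<sigma> = 1" for \<sigma>
      using supp0[of \<sigma>] a1 assms(1,6) by auto
  qed (fact cycle0 b(2))+
  then have cycle: "bdry 2 c = (\<lambda>_. 0)" by (simp add: numeral_2_eq_2)
  have "is_chain (Pow (insert s P) \<inter> F) 2 (cone_chain s c0)"
    unfolding c0_def using is_chain_cone_vertex_diff a1 assms(5,6) by blast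
  moreover have "is_chain (Pow P \<inter> F) 2 b" using b(1) by (simp add: numeral_2_eq_2)
  ultimately have chain: "is_chain (Pow (insert s P) \<inter> F) 2 c"
    unfolding c_def by (auto intro: is_chain_diff is_chain_mono)
  have "arc_cochain A \<sigma> * c \<sigma> = unit_chain {s, js ! a1} \<sigma>" for \<sigma>
  proof -
    have "arc_cochain A \<sigma> * b \<sigma> = 0"
      using b(1) assms(1) by (auto simp: arc_cochain_def is_chain_def)
    moreover have "A \<subseteq> {..<l}" using assms(2) by auto
    ultimately show ?thesis
      using arc_cochain_mult_cone[of A a1 a2 \<sigma>] assms(4,5,7)
      by (simp add: c_def c0_def right_diff_distrib)
  qed
  then have "(\<Sum>\<sigma>\<in>UNIV. arc_cochain A \<sigma> * c \<sigma>) \<noteq> 0"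
    using sum_unit_chain_mult[of "{s, js ! a1}" "\<lambda>_. 1"] by simp
  then show ?thesis
    using red_hom_nonzeroI[OF chain cycle, of "arc_cochain A"] cobdry_arc_cochain[OF closed] assms(1,2)
    by auto
qed

lemma card_sign_changes_eq_2:
  assumes "s \<notin> P" "\<And>d. \<not> red_hom_nonzero (Pow P \<inter> F) d"
    and "\<And>d. \<not> red_hom_nonzero (Pow (insert s P) \<inter> F) d"
  shows "card {k. k < l \<and> (js ! k \<in> P) \<noteq> (js ! (Suc k mod l) \<in> P)} = 2"
proof (cases "set js \<subseteq> P")
  case True
  then show ?thesis using red_hom_nonzero_if_link_inside assms by blast
next
  case False
  then obtain k0 where k0: "k0 < l" "js ! k0 \<notin> P" by (metis in_set_conv_nth subsetI)
  show ?thesis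
  proof (cases "\<exists>k<l. js ! k \<in> P")
    case False
    have "\<forall>x\<in>P. {s, x} \<notin> F"
    proof (intro ballI notI)
      fix x assume "x \<in> P" "{s, x} \<in> F"
      then have "x \<in> nbrs F s" using assms(1) by (auto simp: nbrs_iff)
      then show False using False \<open>x \<in> P\<close> by (metis nbr_eq_nth_js)
    qed
    then show ?thesis
      using red_hom_nonzero_empty[OF complete_simplicial_fanD(1)[OF fan]]
        red_hom_nonzero_isolated_vertex[OF complete_simplicial_fanD(3,3)[OF fan] assms(1)] assms(2,3)
      by (metis equals0I)
  next
    case True
    then obtain k1 where "k1 < l" "js ! k1 \<in> P" by blast
    show ?thesis
    proof (rule card_cyclic_sign_changes_single_run[OF k0 \<open>k1 < l\<close> \<open>js ! k1 \<in> P\<close>])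
      fix A assume A: "A \<subseteq> {k. k < l \<and> js ! k \<in> P}" "A \<noteq> {}"
        and closed: "\<And>k. k < l \<Longrightarrow> js ! k \<in> P \<Longrightarrow> js ! (Suc k mod l) \<in> P \<Longrightarrow> k \<in> A \<longleftrightarrow> Suc k mod l \<in> A"
      show "{k. k < l \<and> js ! k \<in> P} \<subseteq> A"
      proof (rule ccontr)
        assume "\<not> {k. k < l \<and> js ! k \<in> P} \<subseteq> A"
        then obtain a2 where "a2 < l" "js ! a2 \<in> P" "a2 \<notin> A" by blast
        moreover obtain a1 where "a1 \<in> A" using A(2) by blast
        ultimately show False
          using red_hom_nonzero_if_split_runs[OF assms(1) A(1) closed] assms(2,3) by blast
      qed
    qed
  qed
qed

end

theorem lemma4p3:
  fixes v :: "'n::{finite,linorder} \<Rightarrow> real^3" and F :: "'n set set"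
    and g :: "real^3 \<Rightarrow> real" and s :: 'n
  assumes "\<forall>i k. v i $ k \<in> \<int>"
    and "complete_simplicial_fan v F"
    and "sigma_pl v F g"
    and "pic_vec v g \<notin> M_image v"
    and "\<forall>I\<in>Delta v F. pic_vec v g \<notin> interior (Zpic v I)"
    and "g (v s) = 0"
    and "\<forall>i. i \<noteq> s \<longrightarrow> g (v i) \<noteq> 0"
  shows "\<forall>js. cyclic_order_around v F s js \<longrightarrow> sign_changes g v js = 2"
proof (intro allI impI)
  fix js assume "cyclic_order_around v F s js"
  then obtain e1 e2 where "cyclic_link v F s js e1 e2"
    using assms(2) unfolding cyclic_order_around_def cyclic_link_def by blast
  then interpret cyclic_link v F s js e1 e2 .
  define P where "P = {i. g (v i) > 0}"
  have sign: "(0 \<le> g (v (js ! k))) = (js ! k \<in> P)" if "k < l" for k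
    using assms(7) nth_js_neq_s[OF that] by (force simp: P_def)
  have "Suc k mod l < l" for k using js_nonempty by simp
  then have "sign_changes g v js = card {k. k < l \<and> (js ! k \<in> P) \<noteq> (js ! (Suc k mod l) \<in> P)}"
    unfolding sign_changes_def using sign by (metis Suc_eq_plus1)
  also have "\<dots> = 2"
  proof (rule card_sign_changes_eq_2)
    show "s \<notin> P" using assms(6) by (simp add: P_def)
    show "\<not> red_hom_nonzero (Pow P \<inter> F) d" "\<not> red_hom_nonzero (Pow (insert s P) \<inter> F) d" for d
      unfolding P_def by (fact sign_complexes_acyclic[OF assms(2,5,6,7)])+
  qed
  finally show "sign_changes g v js = 2" .
qed

end
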